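(* Let $R=k[[x,y]]/(f)$ be a reduced planar curve singularity with normalization $\widetilde R=\bigoplus_{i=1}^{\ell}k[[t_i]]$, and let $M$ be a rank one torsion-free $R$-module. Let $\delta:=\min\{\dim_k M/R\}$, the minimum over all injective $R$-module homomorphisms $R\hookrightarrow M$ (for which $M/R$ is finite-dimensional). If an injective homomorphism $R\hookrightarrow M$ satisfies $\dim_kM/R=\delta$, then (identifying $M$ with a submodule of the total ring of fractions of $R$ via this embedding) $R\subset M\subset\widetilde R$.
   Context: $k$ is an algebraically closed field of characteristic $0$. The total ring of fractions of $R$ is $K=\prod_{i=1}^\ell k((t_i))$; an injection $R\hookrightarrow M$ of a rank one torsion-free module induces $K\cong M\otimes_RK$, identifying $M$ with an $R$-submodule of $K$ containing $R$. *)

theory Defs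
  imports "HOL-Computational_Algebra.Computational_Algebra"
          "HOL-Library.Function_Algebras"
begin

text \<open>Bivariate formal power series F in k[[x,y]] are represented by their coefficient
  functions F i j (coefficient of x^i y^j).  Substitution of x := X, y := Y, where
  X, Y are univariate power series without constant term (a branch parametrization).\<close>

definition bps_subst :: "(nat \<Rightarrow> nat \<Rightarrow> 'a::comm_ring_1) \<Rightarrow> 'a fps \<Rightarrow> 'a fps \<Rightarrow> 'a fps" where
  "bps_subst F X Y = Abs_fps (\<lambda>n. \<Sum>i\<le>n. \<Sum>j\<le>n. F i j * (X ^ i * Y ^ j) $ n)"

text \<open>The branches are indexed by a finite type 'b (so ell = CARD('b)).  The ring
  K = prod_b k((t_b)) is the function ring 'b => 'a fls (pointwise operations).
  The curve ring R = k[[x,y]]/(f) is the image of k[[x,y]] in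
  prod_b k[[t_b]] subset K under the parametrizations (X b, Y b).\<close>

definition curve_ring :: "('b \<Rightarrow> 'a::comm_ring_1 fps) \<Rightarrow> ('b \<Rightarrow> 'a fps) \<Rightarrow> ('b \<Rightarrow> 'a fls) set" where
  "curve_ring X Y = {z. \<exists>F. \<forall>b. z b = fps_to_fls (bps_subst F (X b) (Y b))}"

definition power_series_part :: "('b \<Rightarrow> 'a::comm_ring_1 fls) set" where
  "power_series_part = {z. \<forall>b. \<exists>g. z b = fps_to_fls g}"

definition nonzerodiv :: "('b \<Rightarrow> 'a::field fls) \<Rightarrow> bool" where
  "nonzerodiv z \<longleftrightarrow> (\<forall>b. z b \<noteq> 0)"

definition integral_closure :: "('b \<Rightarrow> 'a::comm_ring_1 fls) set \<Rightarrow> ('b \<Rightarrow> 'a fls) set" where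
  "integral_closure S = {z. \<exists>n>0. \<exists>c::nat \<Rightarrow> ('b \<Rightarrow> 'a fls).
      (\<forall>j<n. c j \<in> S) \<and> z ^ n + (\<Sum>j<n. c j * z ^ j) = 0}"

definition is_total_ring_of_fractions :: "('b \<Rightarrow> 'a::field fls) set \<Rightarrow> bool" where
  "is_total_ring_of_fractions S \<longleftrightarrow>
     (\<forall>z. \<exists>r\<in>S. \<exists>s\<in>S. nonzerodiv s \<and> z * s = r)"

definition fg_submodule :: "('b \<Rightarrow> 'a::comm_ring_1 fls) set \<Rightarrow> ('b \<Rightarrow> 'a fls) set \<Rightarrow> bool" where
  "fg_submodule S M \<longleftrightarrow> (\<exists>N (g::nat \<Rightarrow> ('b \<Rightarrow> 'a fls)).
      M = {\<Sum>i<N. r i * g i | r. \<forall>i<N. r i \<in> S})"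

definition kscale :: "'a::comm_ring_1 \<Rightarrow> ('b \<Rightarrow> 'a fls) \<Rightarrow> ('b \<Rightarrow> 'a fls)" where
  "kscale c z = (\<lambda>b. fls_const c * z b)"

text \<open>quot_dim A B n: for k-subspaces B \<subseteq> A of K, dim_k (A/B) = n.\<close>
definition quot_dim :: "('b \<Rightarrow> 'a::field fls) set \<Rightarrow> ('b \<Rightarrow> 'a fls) set \<Rightarrow> nat \<Rightarrow> bool" where
  "quot_dim A B n \<longleftrightarrow> (\<exists>v::nat \<Rightarrow> ('b \<Rightarrow> 'a fls).
      (\<forall>i<n. v i \<in> A) \<and>
      (\<forall>c. (\<Sum>i<n. kscale (c i) (v i)) \<in> B \<longrightarrow> (\<forall>i<n. c i = 0)) \<and>
      (\<forall>a\<in>A. \<exists>c. a - (\<Sum>i<n. kscale (c i) (v i)) \<in> B))"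

text \<open>The cyclic submodule S*m (image of the homomorphism S -> M, 1 |-> m).\<close>
definition cyclic :: "('b \<Rightarrow> 'a::comm_ring_1 fls) set \<Rightarrow> ('b \<Rightarrow> 'a fls) \<Rightarrow> ('b \<Rightarrow> 'a fls) set" where
  "cyclic S m = {r * m | r. r \<in> S}"

end

theory Submission
  imports Defs
begin

unbundle fps_syntax

text \<open>
  Write A = {z. z m \<in> M} = m\<inverse> M. It is an R-module with R \<subseteq> A and dim A/R = \<delta>.
  If some z \<in> A had a pole on some branch, then for all but finitely many c \<in> k the element
  u = 1 + c z \<in> A is a nonzerodivisor whose inverse w lies in R~ and vanishes on that branch.
  With a conductor element g (so g R~ \<subseteq> R), the chains w g R~ \<subseteq> g R~ \<subseteq> R \<subseteq> w A give
  dim A/uR = dim wA/R = \<delta> - dim R~/wR~ < \<delta>, so the embedding 1 \<mapsto> u m has smaller colength.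
  A conductor element exists because R~ is a finite module over k[[x]] \<subseteq> R for any nonzerodivisor
  x \<in> R vanishing at the origin, and each of the finitely many generators is a fraction over R.
\<close>

section \<open>Codimension of subspaces of K\<close>

lemma kscale_eq_mult: "kscale c z = (\<lambda>b. fls_const c) * (z::'b \<Rightarrow> 'a::field fls)"
  by (auto simp: kscale_def)

global_interpretation KV: vector_space "kscale :: 'a::field \<Rightarrow> ('b \<Rightarrow> 'a fls) \<Rightarrow> _"
  by unfold_locales (auto simp: kscale_def fun_eq_iff algebra_simps fls_plus_const[symmetric])

lemma kscale_mult_left: "kscale c (x * y) = kscale c x * (y::'b \<Rightarrow> 'a::field fls)"
  by (auto simp: kscale_def fun_eq_iff)

lemma kscale_mult_right: "kscale c (x * y) = x * kscale c (y::'b \<Rightarrow> 'a::field fls)"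
  by (auto simp: kscale_def fun_eq_iff)

lemma kscale_nth: "kscale c z b $$ j = c * z b $$ j"
  by (simp add: kscale_def)

definition quot_basis ::
    "('b \<Rightarrow> 'a::field fls) set \<Rightarrow> ('b \<Rightarrow> 'a fls) set \<Rightarrow> 'i set \<Rightarrow> ('i \<Rightarrow> 'b \<Rightarrow> 'a fls) \<Rightarrow> bool" where
  "quot_basis A B S v \<longleftrightarrow> finite S \<and> (\<forall>s\<in>S. v s \<in> A) \<and>
     (\<forall>c. (\<Sum>s\<in>S. kscale (c s) (v s)) \<in> B \<longrightarrow> (\<forall>s\<in>S. c s = 0)) \<and>
     (\<forall>a\<in>A. \<exists>c. a - (\<Sum>s\<in>S. kscale (c s) (v s)) \<in> B)"

lemma quot_basis_imp_quot_dim: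
  fixes A :: "('b \<Rightarrow> 'a::field fls) set"
  assumes "quot_basis A B S v"
  shows "quot_dim A B (card S)"
proof -
  from assms have fin: "finite S" by (simp add: quot_basis_def)
  obtain h where h: "bij_betw h {..<card S} S"
    using ex_bij_betw_nat_finite[OF fin] by (auto simp: atLeast0LessThan)
  let ?n = "card S"
  define h' where "h' = the_inv_into {..<?n} h"
  have h'h: "h' (h i) = i" if "i < ?n" for i
    unfolding h'_def using h that by (auto simp: bij_betw_def the_inv_into_f_f)
  have reind: "(\<Sum>i<?n. g (h i)) = (\<Sum>s\<in>S. g s)" for g :: "_ \<Rightarrow> 'b \<Rightarrow> 'a fls"
    using sum.reindex_bij_betw[OF h, of g] by simp
  show ?thesis unfolding quot_dim_def
  proof (intro exI[of _ "\<lambda>i. v (h i)"] conjI allI impI ballI)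
    fix i assume "i < ?n" thus "v (h i) \<in> A" using assms h by (auto simp: quot_basis_def bij_betw_def)
  next
    fix c i assume c: "(\<Sum>i<?n. kscale (c i) (v (h i))) \<in> B" and i: "i < ?n"
    have "(\<Sum>i<?n. kscale (c i) (v (h i))) = (\<Sum>i<?n. kscale (c (h' (h i))) (v (h i)))"
      by (rule sum.cong) (auto simp: h'h)
    also have "\<dots> = (\<Sum>s\<in>S. kscale (c (h' s)) (v s))" by (rule reind)
    finally have "\<forall>s\<in>S. c (h' s) = 0" using assms c by (auto simp: quot_basis_def)
    moreover have "h i \<in> S" using h i by (auto simp: bij_betw_def)
    ultimately show "c i = 0" using h'h[OF i] by metis
  next
    fix a assume "a \<in> A"
    then obtain c where c: "a - (\<Sum>s\<in>S. kscale (c s) (v s)) \<in> B"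
      using assms by (auto simp: quot_basis_def)
    have "(\<Sum>s\<in>S. kscale (c s) (v s)) = (\<Sum>i<?n. kscale (c (h i)) (v (h i)))"
      by (rule reind[symmetric])
    thus "\<exists>c. a - (\<Sum>i<?n. kscale (c i) (v (h i))) \<in> B" using c by metis
  qed
qed

lemma quot_dim_imp_quot_basis:
  fixes A :: "('b \<Rightarrow> 'a::field fls) set"
  assumes "quot_dim A B n" and "0 \<in> B"
  obtains T where "quot_basis A B T id" and "card T = n"
proof -
  obtain v where v1: "\<forall>i<n. v i \<in> A"
    and v2: "\<forall>c. (\<Sum>i<n. kscale (c i) (v i)) \<in> B \<longrightarrow> (\<forall>i<n. c i = 0)"
    and v3: "\<forall>a\<in>A. \<exists>c. a - (\<Sum>i<n. kscale (c i) (v i)) \<in> B"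
    using assms unfolding quot_dim_def by blast
  have inj: "inj_on v {..<n}"
  proof (rule inj_onI, rule ccontr)
    fix i j assume i: "i \<in> {..<n}" and j: "j \<in> {..<n}" and e: "v i = v j" and ne: "i \<noteq> j"
    define c where "c = (\<lambda>k. if k = i then (1::'a) else if k = j then -1 else 0)"
    have "(\<Sum>k<n. kscale (c k) (v k)) = (\<Sum>k\<in>{i,j}. kscale (c k) (v k))"
      by (rule sum.mono_neutral_right) (use i j in \<open>auto simp: c_def KV.scale_zero_left\<close>)
    also have "\<dots> = 0" using ne e by (simp add: c_def KV.scale_minus_left)
    finally have "c i = 0" using v2 assms(2) i by auto
    thus False by (simp add: c_def)
  qed
  let ?T = "v ` {..<n}"
  have reind: "(\<Sum>t\<in>?T. g t) = (\<Sum>i<n. g (v i))" for g :: "_ \<Rightarrow> 'b \<Rightarrow> 'a fls"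
    using sum.reindex[OF inj, of g] by simp
  have "quot_basis A B ?T id" unfolding quot_basis_def
  proof (intro conjI allI impI ballI)
    show "finite ?T" by simp
  next
    fix s assume "s \<in> ?T" thus "id s \<in> A" using v1 by auto
  next
    fix c s assume c: "(\<Sum>s\<in>?T. kscale (c s) (id s)) \<in> B" and s: "s \<in> ?T"
    have "(\<Sum>i<n. kscale (c (v i)) (v i)) \<in> B" using c reind[of "\<lambda>t. kscale (c t) t"] by simp
    hence "\<forall>i<n. c (v i) = 0" using v2[rule_format, of "\<lambda>i. c (v i)"] by blast
    thus "c s = 0" using s by auto
  next
    fix a assume "a \<in> A"
    then obtain c where c: "a - (\<Sum>i<n. kscale (c i) (v i)) \<in> B" using v3 by blast
    define c' where "c' = (\<lambda>t. c (the_inv_into {..<n} v t))"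
    have "(\<Sum>s\<in>?T. kscale (c' s) (id s)) = (\<Sum>i<n. kscale (c' (v i)) (v i))" using reind by simp
    also have "\<dots> = (\<Sum>i<n. kscale (c i) (v i))"
      by (rule sum.cong) (auto simp: c'_def the_inv_into_f_f[OF inj])
    finally show "\<exists>c. a - (\<Sum>s\<in>?T. kscale (c s) (id s)) \<in> B" using c by metis
  qed
  moreover have "card ?T = n" using card_image[OF inj] by simp
  ultimately show ?thesis using that by blast
qed

lemma quot_basis_disjoint:
  fixes A :: "('b \<Rightarrow> 'a::field fls) set"
  assumes q: "quot_basis A B T id" and UB: "U \<subseteq> B"
  shows "T \<inter> U = {}"
proof (rule ccontr)
  assume "T \<inter> U \<noteq> {}" then obtain t where t: "t \<in> T" "t \<in> U" by blast
  define c where "c = (\<lambda>s. if s = t then (1::'a) else 0)"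
  have "(\<Sum>s\<in>T. kscale (c s) s) = (\<Sum>s\<in>T. if s = t then t else 0)"
    by (rule sum.cong) (auto simp: c_def)
  also have "\<dots> = t" using t q by (simp add: quot_basis_def)
  finally have "(\<Sum>s\<in>T. kscale (c s) (id s)) \<in> B" using t UB by auto
  hence "c t = 0" using q t unfolding quot_basis_def by blast
  thus False by (simp add: c_def)
qed

lemma quot_basis_Un:
  fixes A :: "('b \<Rightarrow> 'a::field fls) set"
  assumes sB: "KV.subspace B" and CB: "C \<subseteq> B" and BA: "B \<subseteq> A"
    and q1: "quot_basis A B T1 id" and q2: "quot_basis B C T2 id"
  shows "quot_basis A C (T1 \<union> T2) id"
proof -
  have f1: "finite T1" and f2: "finite T2" using q1 q2 by (auto simp: quot_basis_def)
  have T2B: "T2 \<subseteq> B" using q2 by (auto simp: quot_basis_def)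
  have i1: "\<And>c. (\<Sum>s\<in>T1. kscale (c s) s) \<in> B \<Longrightarrow> \<forall>s\<in>T1. c s = 0" using q1 by (auto simp: quot_basis_def)
  have i2: "\<And>c. (\<Sum>s\<in>T2. kscale (c s) s) \<in> C \<Longrightarrow> \<forall>s\<in>T2. c s = 0" using q2 by (auto simp: quot_basis_def)
  have sumB: "(\<Sum>s\<in>T2. kscale (c s) s) \<in> B" for c
    by (rule KV.subspace_sum[OF sB]) (use T2B sB in \<open>auto intro: KV.subspace_scale\<close>)
  have disj: "T1 \<inter> T2 = {}" using quot_basis_disjoint[OF q1 T2B] .
  have split: "(\<Sum>s\<in>T1 \<union> T2. g s) = (\<Sum>s\<in>T1. g s) + (\<Sum>s\<in>T2. g s)" for g :: "_ \<Rightarrow> 'b \<Rightarrow> 'a fls"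
    by (rule sum.union_disjoint) (use f1 f2 disj in auto)
  show ?thesis unfolding quot_basis_def
  proof (intro conjI allI impI ballI)
    show "finite (T1 \<union> T2)" using f1 f2 by auto
  next
    fix s assume "s \<in> T1 \<union> T2" thus "id s \<in> A" using q1 T2B BA by (auto simp: quot_basis_def)
  next
    fix c s assume c: "(\<Sum>s\<in>T1 \<union> T2. kscale (c s) (id s)) \<in> C" and s: "s \<in> T1 \<union> T2"
    let ?S1 = "(\<Sum>s\<in>T1. kscale (c s) s)" and ?S2 = "(\<Sum>s\<in>T2. kscale (c s) s)"
    have e: "?S1 + ?S2 \<in> C" using c split[of "\<lambda>s. kscale (c s) s"] by simp
    have "?S1 + ?S2 - ?S2 \<in> B" using e CB sumB KV.subspace_diff[OF sB] by blast
    hence "?S1 \<in> B" by simp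
    hence c1: "\<forall>s\<in>T1. c s = 0" by (rule i1)
    have "?S1 = 0" using c1 by (auto intro!: sum.neutral simp: KV.scale_zero_left)
    hence "?S2 \<in> C" using e by simp
    hence "\<forall>s\<in>T2. c s = 0" by (rule i2)
    thus "c s = 0" using c1 s by auto
  next
    fix a assume a: "a \<in> A"
    then obtain c1 where c1: "a - (\<Sum>s\<in>T1. kscale (c1 s) s) \<in> B" using q1 by (auto simp: quot_basis_def)
    then obtain c2 where c2: "a - (\<Sum>s\<in>T1. kscale (c1 s) s) - (\<Sum>s\<in>T2. kscale (c2 s) s) \<in> C"
      using q2 by (auto simp: quot_basis_def)
    define c where "c = (\<lambda>s. if s \<in> T1 then c1 s else c2 s)"
    have e1: "(\<Sum>s\<in>T1. kscale (c s) s) = (\<Sum>s\<in>T1. kscale (c1 s) s)"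
      by (rule sum.cong) (auto simp: c_def)
    have e2: "(\<Sum>s\<in>T2. kscale (c s) s) = (\<Sum>s\<in>T2. kscale (c2 s) s)"
      by (rule sum.cong) (use disj in \<open>auto simp: c_def\<close>)
    have "(\<Sum>s\<in>T1 \<union> T2. kscale (c s) (id s)) = (\<Sum>s\<in>T1. kscale (c1 s) s) + (\<Sum>s\<in>T2. kscale (c2 s) s)"
      using split[of "\<lambda>s. kscale (c s) s"] e1 e2 by simp
    hence "a - (\<Sum>s\<in>T1 \<union> T2. kscale (c s) (id s)) = a - (\<Sum>s\<in>T1. kscale (c1 s) s) - (\<Sum>s\<in>T2. kscale (c2 s) s)"
      by (simp add: diff_diff_eq)
    thus "\<exists>c. a - (\<Sum>s\<in>T1 \<union> T2. kscale (c s) (id s)) \<in> C" using c2 by metis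
  qed
qed

lemma quot_basis_card_le:
  fixes A :: "('b \<Rightarrow> 'a::field fls) set"
  assumes sB: "KV.subspace B" and q: "quot_basis A B T id" and q': "quot_basis A B T' id"
  shows "card T \<le> card T'"
proof -
  have f: "finite T" and f': "finite T'" using q q' by (auto simp: quot_basis_def)
  have "\<forall>t\<in>T. \<exists>c. t - (\<Sum>s\<in>T'. kscale (c s) s) \<in> B" using q q' by (auto simp: quot_basis_def)
  then obtain cc where cc: "\<And>t. t \<in> T \<Longrightarrow> t - (\<Sum>s\<in>T'. kscale (cc t s) s) \<in> B" by metis
  define \<sigma> where "\<sigma> t = (\<Sum>s\<in>T'. kscale (cc t s) s)" for t
  have iT: "\<And>c. (\<Sum>s\<in>T. kscale (c s) s) \<in> B \<Longrightarrow> \<forall>s\<in>T. c s = 0" using q by (auto simp: quot_basis_def)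
  have key: "(\<Sum>t\<in>T. kscale (c t) t) - (\<Sum>t\<in>T. kscale (c t) (\<sigma> t)) \<in> B" for c
  proof -
    have "(\<Sum>t\<in>T. kscale (c t) t) - (\<Sum>t\<in>T. kscale (c t) (\<sigma> t)) = (\<Sum>t\<in>T. kscale (c t) (t - \<sigma> t))"
      by (simp add: sum_subtractf KV.scale_right_diff_distrib)
    also have "\<dots> \<in> B" by (rule KV.subspace_sum[OF sB]) (use cc sB in \<open>auto simp: \<sigma>_def intro: KV.subspace_scale\<close>)
    finally show ?thesis .
  qed
  have inj: "inj_on \<sigma> T"
  proof (rule inj_onI, rule ccontr)
    fix t1 t2 assume t1: "t1 \<in> T" and t2: "t2 \<in> T" and e: "\<sigma> t1 = \<sigma> t2" and ne: "t1 \<noteq> t2"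
    define c where "c = (\<lambda>k. if k = t1 then (1::'a) else if k = t2 then -1 else 0)"
    have z: "(\<Sum>t\<in>T. kscale (c t) (g t)) = (\<Sum>t\<in>{t1,t2}. kscale (c t) (g t))" for g :: "_ \<Rightarrow> 'b \<Rightarrow> 'a fls"
      by (rule sum.mono_neutral_right) (use t1 t2 f in \<open>auto simp: c_def KV.scale_zero_left\<close>)
    have "(\<Sum>t\<in>T. kscale (c t) (\<sigma> t)) = 0" using z[of \<sigma>] ne e by (simp add: c_def KV.scale_minus_left)
    hence "(\<Sum>t\<in>T. kscale (c t) t) \<in> B" using key[of c] by simp
    hence "c t1 = 0" using iT t1 by blast
    thus False by (simp add: c_def)
  qed
  have sp: "\<sigma> ` T \<subseteq> KV.span T'"
    unfolding \<sigma>_def by (auto intro!: KV.span_sum KV.span_scale intro: KV.span_base)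
  have ind: "KV.independent (\<sigma> ` T)"
  proof (rule KV.independent_if_scalars_zero)
    show "finite (\<sigma> ` T)" using f by simp
  next
    fix u x assume u: "(\<Sum>v\<in>\<sigma> ` T. kscale (u v) v) = 0" and x: "x \<in> \<sigma> ` T"
    have "(\<Sum>t\<in>T. kscale (u (\<sigma> t)) (\<sigma> t)) = 0" using u sum.reindex[OF inj, of "\<lambda>v. kscale (u v) v"] by simp
    hence "(\<Sum>t\<in>T. kscale (u (\<sigma> t)) t) \<in> B" using key[of "\<lambda>t. u (\<sigma> t)"] by simp
    hence "\<forall>t\<in>T. u (\<sigma> t) = 0" using iT[of "\<lambda>t. u (\<sigma> t)"] by blast
    thus "u x = 0" using x by auto
  qed
  have "card (\<sigma> ` T) \<le> card T'" using KV.independent_span_bound[OF f' ind sp] by simp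
  thus ?thesis using card_image[OF inj] by simp
qed

lemma quot_basis_exists:
  fixes Q :: "('b \<Rightarrow> 'a::field fls) set"
  assumes sP: "KV.subspace P" and PQ: "P \<subseteq> Q" and fS: "finite S" and QS: "Q \<subseteq> KV.span S"
  shows "\<exists>U. quot_basis Q P U id"
proof -
  obtain BP where BP: "BP \<subseteq> P" "KV.independent BP" "P \<subseteq> KV.span BP"
    using KV.maximal_independent_subset by blast
  obtain BQ where BQ: "BP \<subseteq> BQ" "BQ \<subseteq> Q" "KV.independent BQ" "Q \<subseteq> KV.span BQ"
    using KV.maximal_independent_subset_extend[of BP Q] BP PQ by blast
  have fBQ: "finite BQ" using KV.independent_span_bound[OF fS BQ(3)] BQ(2) QS by blast
  have fBP: "finite BP" using fBQ BQ(1) finite_subset by blast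
  define U where "U = BQ - BP"
  have fU: "finite U" using fBQ by (simp add: U_def)
  have spP: "KV.span BP \<subseteq> P" using BP(1) sP by (simp add: KV.span_minimal)
  have split: "(\<Sum>v\<in>BQ. g v) = (\<Sum>v\<in>U. g v) + (\<Sum>v\<in>BP. g v)" for g :: "_ \<Rightarrow> 'b \<Rightarrow> 'a fls"
  proof -
    show ?thesis by (simp add: sum.subset_diff[OF BQ(1) fBQ] U_def)
  qed
  have "quot_basis Q P U id" unfolding quot_basis_def
  proof (intro conjI allI impI ballI)
    show "finite U" by fact
  next
    fix s assume "s \<in> U" thus "id s \<in> Q" using BQ by (auto simp: U_def)
  next
    fix c s assume c: "(\<Sum>s\<in>U. kscale (c s) (id s)) \<in> P" and s: "s \<in> U"
    hence "(\<Sum>s\<in>U. kscale (c s) s) \<in> KV.span BP" using BP(3) by auto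
    then obtain d where d: "(\<Sum>v\<in>BP. kscale (d v) v) = (\<Sum>s\<in>U. kscale (c s) s)"
      using KV.span_finite[OF fBP] by auto
    define e where "e = (\<lambda>v. if v \<in> U then c v else - d v)"
    have "(\<Sum>v\<in>BQ. kscale (e v) v) = (\<Sum>v\<in>U. kscale (c v) v) + (\<Sum>v\<in>BP. kscale (- d v) v)"
      unfolding split by (auto simp: e_def U_def intro!: sum.cong arg_cong2[where f="(+)"])
    also have "\<dots> = 0" using d by (simp add: KV.scale_minus_left sum_negf)
    finally have "\<forall>v\<in>BQ. e v = 0" using KV.independentD[OF BQ(3) fBQ subset_refl] by blast
    thus "c s = 0" using s by (auto simp: e_def U_def)
  next
    fix q assume "q \<in> Q"
    hence "q \<in> KV.span BQ" using BQ by auto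
    then obtain e where e: "q = (\<Sum>v\<in>BQ. kscale (e v) v)" using KV.span_finite[OF fBQ] by auto
    have "q - (\<Sum>s\<in>U. kscale (e s) (id s)) = (\<Sum>v\<in>BP. kscale (e v) v)" using e split by simp
    also have "\<dots> \<in> KV.span BP" by (rule KV.span_sum) (auto intro: KV.span_scale KV.span_base)
    also have "\<dots> \<subseteq> P" by (rule spP)
    finally show "\<exists>c. q - (\<Sum>s\<in>U. kscale (c s) (id s)) \<in> P" by blast
  qed
  thus ?thesis by blast
qed

lemma quot_basis_lift:
  fixes X :: "('b \<Rightarrow> 'a::field fls) set"
  assumes sV: "KV.subspace V" and sY: "KV.subspace Y"
    and q: "quot_basis (V \<inter> X) (V \<inter> Y) U id"
    and rep: "\<And>x. x \<in> X \<Longrightarrow> \<exists>s\<in>V \<inter> X. x - s \<in> Y"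
  shows "quot_basis X Y U id"
  unfolding quot_basis_def
proof (intro conjI allI impI ballI)
  show "finite U" using q by (simp add: quot_basis_def)
next
  fix s assume "s \<in> U" thus "id s \<in> X" using q by (auto simp: quot_basis_def)
next
  fix c s assume c: "(\<Sum>s\<in>U. kscale (c s) (id s)) \<in> Y" and s: "s \<in> U"
  have "(\<Sum>s\<in>U. kscale (c s) (id s)) \<in> V"
    by (intro KV.subspace_sum[OF sV] KV.subspace_scale[OF sV]) (use q in \<open>auto simp: quot_basis_def\<close>)
  thus "c s = 0" using c s q unfolding quot_basis_def by blast
next
  fix x assume "x \<in> X"
  then obtain s where s: "s \<in> V \<inter> X" "x - s \<in> Y" using rep by blast
  then obtain c where c: "s - (\<Sum>u\<in>U. kscale (c u) (id u)) \<in> V \<inter> Y"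
    using q unfolding quot_basis_def by blast
  have "x - (\<Sum>u\<in>U. kscale (c u) (id u)) = (x - s) + (s - (\<Sum>u\<in>U. kscale (c u) (id u)))" by simp
  also have "\<dots> \<in> Y" using s(2) c KV.subspace_add[OF sY] by blast
  finally show "\<exists>c. x - (\<Sum>u\<in>U. kscale (c u) (id u)) \<in> Y" by blast
qed

text \<open>Both quotients are computed inside the finite-dimensional span of a basis of A modulo C.\<close>

lemma quot_basis_split:
  fixes A :: "('b \<Rightarrow> 'a::field fls) set"
  assumes sA: "KV.subspace A" and sB: "KV.subspace B" and sC: "KV.subspace C"
    and CB: "C \<subseteq> B" and BA: "B \<subseteq> A" and q: "quot_basis A C T id"
  obtains T1 T2 where "quot_basis A B T1 id" and "quot_basis B C T2 id"
proof -
  let ?V = "KV.span T"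
  have fT: "finite T" and "T \<subseteq> A" using q by (auto simp: quot_basis_def)
  hence VA: "?V \<inter> A = ?V" using sA by (simp add: KV.span_minimal Int_absorb2)
  have repr: "\<exists>s\<in>?V. a - s \<in> C" if a: "a \<in> A" for a
  proof -
    obtain c where "a - (\<Sum>s\<in>T. kscale (c s) s) \<in> C" using q a unfolding quot_basis_def by auto
    moreover have "(\<Sum>s\<in>T. kscale (c s) s) \<in> ?V" by (intro KV.span_sum KV.span_scale KV.span_base)
    ultimately show ?thesis by blast
  qed
  obtain U1 where "quot_basis (?V \<inter> A) (?V \<inter> B) U1 id"
    using quot_basis_exists[of "?V \<inter> B" ?V T] KV.subspace_inter[OF KV.subspace_span sB] fT VA by auto
  moreover have "\<exists>s\<in>?V \<inter> A. a - s \<in> B" if "a \<in> A" for a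
    using repr[OF that] CB VA by blast
  moreover obtain U2 where "quot_basis (?V \<inter> B) (?V \<inter> C) U2 id"
    using quot_basis_exists[of "?V \<inter> C" "?V \<inter> B" T] KV.subspace_inter[OF KV.subspace_span sC] CB fT
    by auto
  moreover have "\<exists>s\<in>?V \<inter> B. b - s \<in> C" if b: "b \<in> B" for b
  proof -
    obtain s where s: "s \<in> ?V" "b - s \<in> C" using repr b BA by blast
    have "s = b - (b - s)" by simp
    hence "s \<in> B" using b s(2) CB KV.subspace_diff[OF sB] by (metis subsetD)
    thus ?thesis using s by blast
  qed
  ultimately show ?thesis
    using that quot_basis_lift[OF KV.subspace_span sB] quot_basis_lift[OF KV.subspace_span sC] by blast
qed

lemma quot_dim_unique:
  fixes A :: "('b \<Rightarrow> 'a::field fls) set"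
  assumes sB: "KV.subspace B" and "quot_dim A B n" and "quot_dim A B n'"
  shows "n = n'"
proof -
  have "0 \<in> B" using sB by (rule KV.subspace_0)
  then obtain T T' where T: "quot_basis A B T id" "card T = n" and T': "quot_basis A B T' id" "card T' = n'"
    using quot_dim_imp_quot_basis assms(2,3) by metis
  show ?thesis
    using quot_basis_card_le[OF sB T(1) T'(1)] quot_basis_card_le[OF sB T'(1) T(1)] T(2) T'(2) by simp
qed

lemma quot_dim_add:
  fixes A :: "('b \<Rightarrow> 'a::field fls) set"
  assumes sB: "KV.subspace B" and sC: "KV.subspace C" and CB: "C \<subseteq> B" and BA: "B \<subseteq> A"
    and q1: "quot_dim A B n" and q2: "quot_dim B C k"
  shows "quot_dim A C (n + k)"
proof -
  obtain T1 where T1: "quot_basis A B T1 id" "card T1 = n"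
    using quot_dim_imp_quot_basis[OF q1 KV.subspace_0[OF sB]] by blast
  obtain T2 where T2: "quot_basis B C T2 id" "card T2 = k"
    using quot_dim_imp_quot_basis[OF q2 KV.subspace_0[OF sC]] by blast
  have U: "quot_basis A C (T1 \<union> T2) id" "T1 \<inter> T2 = {}"
    using quot_basis_Un[OF sB CB BA T1(1) T2(1)] quot_basis_disjoint[OF T1(1)] T2(1)
    by (auto simp: quot_basis_def)
  have "finite T1" "finite T2" using T1 T2 by (auto simp: quot_basis_def)
  hence "card (T1 \<union> T2) = n + k" using card_Un_disjoint U(2) T1(2) T2(2) by metis
  thus ?thesis using quot_basis_imp_quot_dim[OF U(1)] by simp
qed

lemma quot_dim_split:
  fixes A :: "('b \<Rightarrow> 'a::field fls) set"
  assumes sA: "KV.subspace A" and sB: "KV.subspace B" and sC: "KV.subspace C"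
    and CB: "C \<subseteq> B" and BA: "B \<subseteq> A" and q: "quot_dim A C p"
  obtains n k where "quot_dim A B n" and "quot_dim B C k" and "n + k = p"
proof -
  obtain T where "quot_basis A C T id" using quot_dim_imp_quot_basis[OF q KV.subspace_0[OF sC]] .
  then obtain T1 T2 where "quot_basis A B T1 id" "quot_basis B C T2 id"
    by (rule quot_basis_split[OF sA sB sC CB BA])
  hence q1: "quot_dim A B (card T1)" and q2: "quot_dim B C (card T2)"
    by (simp_all add: quot_basis_imp_quot_dim)
  have "card T1 + card T2 = p"
    using quot_dim_unique[OF sC quot_dim_add[OF sB sC CB BA q1 q2] q] .
  thus ?thesis using q1 q2 that by blast
qed

definition inverse_fun :: "('b \<Rightarrow> 'a::field fls) \<Rightarrow> 'b \<Rightarrow> 'a fls" where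
  "inverse_fun u = (\<lambda>b. inverse (u b))"

lemma inverse_fun_mult: "nonzerodiv u \<Longrightarrow> u * inverse_fun u = 1"
  and inverse_fun_mult': "nonzerodiv u \<Longrightarrow> inverse_fun u * u = 1"
  by (auto simp: inverse_fun_def nonzerodiv_def fun_eq_iff)

lemma nonzerodiv_inverse_fun: "nonzerodiv u \<Longrightarrow> nonzerodiv (inverse_fun u)"
  by (simp add: nonzerodiv_def inverse_fun_def)

lemma nonzerodiv_mult: "nonzerodiv u \<Longrightarrow> nonzerodiv v \<Longrightarrow> nonzerodiv (u * (v :: 'b \<Rightarrow> 'a::field fls))"
  by (simp add: nonzerodiv_def)

lemma image_mult_mult: "(\<lambda>a. w * a) ` ((\<lambda>a. v * a) ` S) = (\<lambda>a. (w * v) * a) ` (S :: 'a::semigroup_mult set)"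
  by (simp only: image_image mult.assoc)

lemma image_mult_cancel: "w * v = 1 \<Longrightarrow> (\<lambda>a. w * a) ` ((\<lambda>a. v * a) ` S) = (S :: 'a::monoid_mult set)"
  by (simp add: image_mult_mult)

lemma KV_subspace_mult_image:
  fixes S :: "('b \<Rightarrow> 'a::field fls) set"
  assumes "KV.subspace S"
  shows "KV.subspace ((\<lambda>a. w * a) ` S)"
proof (rule KV.subspaceI)
  have "w * 0 \<in> (\<lambda>a. w * a) ` S" using KV.subspace_0[OF assms] by (rule imageI)
  thus "0 \<in> (\<lambda>a. w * a) ` S" by simp
next
  fix x y assume "x \<in> (\<lambda>a. w * a) ` S" "y \<in> (\<lambda>a. w * a) ` S"
  then obtain a a' where "a \<in> S" "a' \<in> S" "x = w * a" "y = w * a'" by auto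
  moreover from this have "a + a' \<in> S" using assms by (simp add: KV.subspace_add)
  ultimately show "x + y \<in> (\<lambda>a. w * a) ` S" by (metis distrib_left imageI)
next
  fix c x assume "x \<in> (\<lambda>a. w * a) ` S"
  then obtain a where "a \<in> S" "x = w * a" by auto
  moreover from this have "kscale c a \<in> S" using assms by (simp add: KV.subspace_scale)
  ultimately show "kscale c x \<in> (\<lambda>a. w * a) ` S" by (metis kscale_mult_right imageI)
qed

lemma quot_dim_mult_image:
  fixes A :: "('b \<Rightarrow> 'a::field fls) set"
  assumes w: "nonzerodiv w" and q: "quot_dim A B n"
  shows "quot_dim ((\<lambda>a. w * a) ` A) ((\<lambda>a. w * a) ` B) n"
proof -
  obtain v where v1: "\<forall>i<n. v i \<in> A"
    and v2: "\<forall>c. (\<Sum>i<n. kscale (c i) (v i)) \<in> B \<longrightarrow> (\<forall>i<n. c i = 0)"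
    and v3: "\<forall>a\<in>A. \<exists>c. a - (\<Sum>i<n. kscale (c i) (v i)) \<in> B"
    using q unfolding quot_dim_def by blast
  have lin: "(\<Sum>i<n. kscale (c i) (w * v i)) = w * (\<Sum>i<n. kscale (c i) (v i))" for c
    by (simp add: sum_distrib_left kscale_mult_right)
  have cancel: "inverse_fun w * (w * x) = x" for x
    using inverse_fun_mult'[OF w] by (simp add: mult.assoc[symmetric])
  show ?thesis unfolding quot_dim_def
  proof (intro exI[of _ "\<lambda>i. w * v i"] conjI allI impI ballI)
    fix i assume "i < n" thus "w * v i \<in> (*) w ` A" using v1 by auto
  next
    fix c i assume c: "(\<Sum>i<n. kscale (c i) (w * v i)) \<in> (*) w ` B" and i: "i < n"
    then obtain b where b: "b \<in> B" "w * (\<Sum>i<n. kscale (c i) (v i)) = w * b" unfolding lin by auto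
    hence "(\<Sum>i<n. kscale (c i) (v i)) = b" using cancel by metis
    thus "c i = 0" using v2 b i by auto
  next
    fix a assume "a \<in> (*) w ` A"
    then obtain a0 where a0: "a0 \<in> A" "a = w * a0" by auto
    then obtain c where c: "a0 - (\<Sum>i<n. kscale (c i) (v i)) \<in> B" using v3 by blast
    have "a - (\<Sum>i<n. kscale (c i) (w * v i)) = w * (a0 - (\<Sum>i<n. kscale (c i) (v i)))"
      using a0 by (simp add: lin right_diff_distrib)
    thus "\<exists>c. a - (\<Sum>i<n. kscale (c i) (w * v i)) \<in> (*) w ` B" using c by blast
  qed
qed

section \<open>Substituting a parametrization into bivariate series\<close>

text \<open>Bivariate series are encoded as iterated series, F $ i $ j being the coefficient of
  x^i y^j, so that k[[x,y]] inherits its ring structure from the library.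
  Multiplicativity of the substitution is proved degree by degree: up to degree n it agrees
  with the polynomial substitution subst2_upto n.\<close>

definition fps2_subst :: "'a::comm_ring_1 fps fps \<Rightarrow> 'a fps \<Rightarrow> 'a fps \<Rightarrow> 'a fps" where
  "fps2_subst F X Y = bps_subst (\<lambda>i j. F$i$j) X Y"

definition eq_upto :: "nat \<Rightarrow> 'a::comm_ring_1 fps \<Rightarrow> 'a fps \<Rightarrow> bool" where
  "eq_upto n f g \<longleftrightarrow> (\<forall>m\<le>n. f$m = g$m)"

definition subst_upto :: "nat \<Rightarrow> 'a::comm_ring_1 fps \<Rightarrow> 'a fps \<Rightarrow> 'a fps" where
  "subst_upto n Y f = (\<Sum>j\<le>n. fps_const (f$j) * Y^j)"

definition subst2_upto :: "nat \<Rightarrow> 'a::comm_ring_1 fps \<Rightarrow> 'a fps \<Rightarrow> 'a fps fps \<Rightarrow> 'a fps" where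
  "subst2_upto n X Y F = (\<Sum>i\<le>n. subst_upto n Y (F$i) * X^i)"

lemma eq_upto_refl[simp]: "eq_upto n f f" by (simp add: eq_upto_def)
lemma eq_upto_sym: "eq_upto n f g \<Longrightarrow> eq_upto n g f" by (simp add: eq_upto_def)
lemma eq_upto_trans [trans]: "eq_upto n f g \<Longrightarrow> eq_upto n g h \<Longrightarrow> eq_upto n f h" by (simp add: eq_upto_def)
lemma eq_upto_mult: "eq_upto n f f' \<Longrightarrow> eq_upto n g g' \<Longrightarrow> eq_upto n (f * g) (f' * g')"
  unfolding eq_upto_def fps_mult_nth by (auto intro!: sum.cong)
lemma eq_upto_sum: "(\<And>i. i \<in> S \<Longrightarrow> eq_upto n (f i) (g i)) \<Longrightarrow> eq_upto n (sum f S) (sum g S)"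
  unfolding eq_upto_def fps_sum_nth by (auto intro!: sum.cong)
lemma fps_eq_if_eq_upto: "(\<And>n. eq_upto n f g) \<Longrightarrow> f = g"
  by (auto simp: eq_upto_def intro!: fps_ext)

lemma fps_mult_power_nth_eq_0:
  fixes Z :: "'a::comm_ring_1 fps"
  assumes "Z$0 = 0" "m < k"
  shows "(c * Z^k)$m = 0"
proof -
  have "Z = fps_shift 1 Z * fps_X"
    by (rule fps_ext) (use assms in \<open>auto simp: fps_X_mult_right_nth\<close>)
  hence "c * Z^k = (c * (fps_shift 1 Z)^k) * fps_X^k"
    by (metis (no_types, lifting) mult.assoc power_mult_distrib)
  thus ?thesis using assms by (simp add: fps_X_power_mult_right_nth)
qed

lemma eq_upto_mult_sum_powers:
  fixes Z :: "'a::comm_ring_1 fps"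
  assumes Z0: "Z$0 = 0"
  shows "eq_upto n ((\<Sum>i\<le>n. A i * Z^i) * (\<Sum>i\<le>n. B i * Z^i)) (\<Sum>p\<le>n. (\<Sum>a\<le>p. A a * B (p-a)) * Z^p)"
proof -
  let ?g = "\<lambda>a a'. A a * B a' * Z^(a+a')"
  have l: "(\<Sum>i\<le>n. A i * Z^i) * (\<Sum>i\<le>n. B i * Z^i) = (\<Sum>(a,a')\<in>{..n}\<times>{..n}. ?g a a')"
    by (simp add: sum_product sum.cartesian_product power_add algebra_simps)
  have r: "(\<Sum>p\<le>n. (\<Sum>a\<le>p. A a * B (p-a)) * Z^p) = (\<Sum>(a,a')\<in>{(i,j). i+j \<le> n}. ?g a a')"
    by (subst sum.triangle_reindex_eq) (auto simp: sum_distrib_right intro!: sum.cong)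
  show ?thesis unfolding eq_upto_def l r
  proof (intro allI impI)
    fix m assume m: "m \<le> n"
    have "(\<Sum>(a,a')\<in>{..n}\<times>{..n}. ?g a a') $ m = (\<Sum>(a,a')\<in>{..n}\<times>{..n}. ?g a a' $ m)"
      by (simp add: fps_sum_nth case_prod_beta)
    also have "\<dots> = (\<Sum>(a,a')\<in>{(i,j). i+j \<le> n}. ?g a a' $ m)"
    proof (rule sum.mono_neutral_right)
      show "finite ({..n}\<times>{..n})" by simp
      show "{(i,j). i+j \<le> n} \<subseteq> {..n}\<times>{..n}" by auto
      show "\<forall>i\<in>{..n}\<times>{..n} - {(i,j). i+j \<le> n}. (case i of (a, a') \<Rightarrow> ?g a a' $ m) = 0"
        using m by (auto intro!: fps_mult_power_nth_eq_0[OF Z0])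
    qed
    also have "\<dots> = (\<Sum>(a,a')\<in>{(i,j). i+j \<le> n}. ?g a a') $ m"
      by (simp add: fps_sum_nth case_prod_beta)
    finally show "(\<Sum>(a,a')\<in>{..n}\<times>{..n}. ?g a a') $ m = (\<Sum>(a,a')\<in>{(i,j). i+j \<le> n}. ?g a a') $ m" .
  qed
qed

lemma fps_powers_mult_nth_eq_0:
  fixes X Y :: "'a::comm_ring_1 fps"
  assumes "X$0 = 0" "Y$0 = 0" "m < i \<or> m < j"
  shows "(X^i * Y^j)$m = 0"
  using assms fps_mult_power_nth_eq_0[of X m i "Y^j"] fps_mult_power_nth_eq_0[of Y m j "X^i"] by (auto simp: mult.commute)

lemma fps2_subst_nth: "fps2_subst F X Y $ m = (\<Sum>i\<le>m. \<Sum>j\<le>m. F$i$j * (X^i * Y^j)$m)"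
  by (simp add: fps2_subst_def bps_subst_def)

lemma double_sum_atMost_shrink:
  fixes h :: "nat \<Rightarrow> nat \<Rightarrow> 'a::comm_monoid_add"
  assumes "m \<le> n" "\<And>i j. m < i \<or> m < j \<Longrightarrow> h i j = 0"
  shows "(\<Sum>i\<le>n. \<Sum>j\<le>n. h i j) = (\<Sum>i\<le>m. \<Sum>j\<le>m. h i j)"
proof -
  have "(\<Sum>i\<le>n. \<Sum>j\<le>n. h i j) = (\<Sum>i\<le>n. \<Sum>j\<le>m. h i j)"
    by (rule sum.cong[OF refl], rule sum.mono_neutral_right) (use assms in auto)
  also have "\<dots> = (\<Sum>i\<le>m. \<Sum>j\<le>m. h i j)"
    by (rule sum.mono_neutral_right) (use assms in \<open>auto intro!: sum.neutral\<close>)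
  finally show ?thesis .
qed

lemma eq_upto_fps2_subst:
  fixes X Y :: "'a::comm_ring_1 fps"
  assumes X0: "X$0 = 0" and Y0: "Y$0 = 0"
  shows "eq_upto n (fps2_subst F X Y) (subst2_upto n X Y F)"
  unfolding eq_upto_def
proof (intro allI impI)
  fix m assume m: "m \<le> n"
  have "subst2_upto n X Y F $ m = (\<Sum>i\<le>n. \<Sum>j\<le>n. F$i$j * (X^i * Y^j)$m)"
  proof -
    have e: "(fps_const (F$i$j) * Y^j * X^i) $ m = F$i$j * (X^i*Y^j)$m" for i j
    proof -
      have eq: "fps_const (F$i$j) * Y^j * X^i = fps_const (F$i$j) * (X^i*Y^j)" by (simp add: algebra_simps)
      show ?thesis unfolding eq by (rule fps_mult_left_const_nth)
    qed
    show ?thesis unfolding subst2_upto_def subst_upto_def fps_sum_nth sum_distrib_right e ..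
  qed
  also have "\<dots> = (\<Sum>i\<le>m. \<Sum>j\<le>m. F$i$j * (X^i * Y^j)$m)"
    by (rule double_sum_atMost_shrink[OF m]) (simp add: fps_powers_mult_nth_eq_0[OF X0 Y0])
  finally show "fps2_subst F X Y $ m = subst2_upto n X Y F $ m" by (simp add: fps2_subst_nth)
qed

lemma subst_upto_add: "subst_upto n Y (f + g) = subst_upto n Y f + subst_upto n Y g"
  by (simp add: subst_upto_def sum.distrib algebra_simps flip: fps_const_add)

lemma subst_upto_0[simp]: "subst_upto n Y 0 = 0" by (simp add: subst_upto_def)

lemma fps_const_sum: "finite S \<Longrightarrow> fps_const (\<Sum>a\<in>S. f a) = (\<Sum>a\<in>S. fps_const (f a))"
  by (induction S rule: finite_induct) (auto simp flip: fps_const_add)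

lemma subst_upto_sum: "finite S \<Longrightarrow> subst_upto n Y (\<Sum>a\<in>S. f a) = (\<Sum>a\<in>S. subst_upto n Y (f a))"
  by (induction S rule: finite_induct) (simp_all add: subst_upto_add)

lemma eq_upto_subst_upto_mult:
  fixes Y :: "'a::comm_ring_1 fps"
  assumes Y0: "Y$0 = 0"
  shows "eq_upto n (subst_upto n Y f * subst_upto n Y g) (subst_upto n Y (f * g))"
proof -
  have "eq_upto n (subst_upto n Y f * subst_upto n Y g) (\<Sum>p\<le>n. (\<Sum>a\<le>p. fps_const (f$a) * fps_const (g$(p-a))) * Y^p)"
    unfolding subst_upto_def by (rule eq_upto_mult_sum_powers[OF Y0])
  also have "(\<Sum>p\<le>n. (\<Sum>a\<le>p. fps_const (f$a) * fps_const (g$(p-a))) * Y^p) = subst_upto n Y (f * g)"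
    unfolding subst_upto_def fps_mult_nth atLeast0AtMost
    by (intro sum.cong refl) (simp add: fps_const_sum)
  finally show ?thesis .
qed

lemma eq_upto_subst2_upto_mult:
  fixes X Y :: "'a::comm_ring_1 fps"
  assumes X0: "X$0 = 0" and Y0: "Y$0 = 0"
  shows "eq_upto n (subst2_upto n X Y F * subst2_upto n X Y G) (subst2_upto n X Y (F * G))"
proof -
  have "eq_upto n (subst2_upto n X Y F * subst2_upto n X Y G)
      (\<Sum>p\<le>n. (\<Sum>a\<le>p. subst_upto n Y (F$a) * subst_upto n Y (G$(p-a))) * X^p)"
    unfolding subst2_upto_def by (rule eq_upto_mult_sum_powers[OF X0])
  also have "eq_upto n \<dots> (subst2_upto n X Y (F * G))"
    unfolding subst2_upto_def
  proof (rule eq_upto_sum, rule eq_upto_mult[OF _ eq_upto_refl])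
    fix p
    have "eq_upto n (\<Sum>a\<le>p. subst_upto n Y (F$a) * subst_upto n Y (G$(p-a))) (\<Sum>a\<le>p. subst_upto n Y (F$a * G$(p-a)))"
      by (rule eq_upto_sum) (rule eq_upto_subst_upto_mult[OF Y0])
    also have "(\<Sum>a\<le>p. subst_upto n Y (F$a * G$(p-a))) = subst_upto n Y ((F*G)$p)"
      by (simp add: fps_mult_nth atLeast0AtMost subst_upto_sum)
    finally show "eq_upto n (\<Sum>a\<le>p. subst_upto n Y (F$a) * subst_upto n Y (G$(p-a)))
      (subst_upto n Y ((F * G)$p))" .
  qed
  finally show ?thesis .
qed

lemma fps2_subst_mult:
  fixes X Y :: "'a::comm_ring_1 fps"
  assumes X0: "X$0 = 0" and Y0: "Y$0 = 0"
  shows "fps2_subst (F * G) X Y = fps2_subst F X Y * fps2_subst G X Y"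
proof (rule fps_eq_if_eq_upto)
  fix n
  have "eq_upto n (fps2_subst (F * G) X Y) (subst2_upto n X Y (F * G))"
    by (rule eq_upto_fps2_subst[OF X0 Y0])
  also have "eq_upto n \<dots> (subst2_upto n X Y F * subst2_upto n X Y G)"
    by (rule eq_upto_sym, rule eq_upto_subst2_upto_mult[OF X0 Y0])
  also have "eq_upto n \<dots> (fps2_subst F X Y * fps2_subst G X Y)"
    by (rule eq_upto_mult; rule eq_upto_sym, rule eq_upto_fps2_subst[OF X0 Y0])
  finally show "eq_upto n (fps2_subst (F * G) X Y) (fps2_subst F X Y * fps2_subst G X Y)" .
qed

lemma fps2_subst_add: "fps2_subst (F + G) X Y = fps2_subst F X Y + fps2_subst G X Y"
  by (rule fps_ext) (simp add: fps2_subst_nth sum.distrib algebra_simps)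

lemma fps2_subst_const: "fps2_subst (fps_const (fps_const c)) X Y = fps_const c"
proof (rule fps_ext)
  fix n
  have "fps2_subst (fps_const (fps_const c)) X Y $ n = (\<Sum>i\<le>n. \<Sum>j\<le>n. (if i = 0 \<and> j = 0 then c * (X^i * Y^j)$n else 0))"
    unfolding fps2_subst_nth by (intro sum.cong refl) auto
  also have "\<dots> = c * (1::'a fps)$n"
    by (simp add: sum.If_cases Int_def)
  finally show "fps2_subst (fps_const (fps_const c)) X Y $ n = fps_const c $ n" by simp
qed

lemma fps2_subst_one: "fps2_subst 1 X Y = 1"
  using fps2_subst_const[of 1 X Y] by simp

lemma fps2_subst_zero: "fps2_subst 0 X Y = 0"
  using fps2_subst_const[of 0 X Y] by simp

lemma fps2_subst_power:
  fixes X Y :: "'a::comm_ring_1 fps"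
  assumes X0: "X$0 = 0" and Y0: "Y$0 = 0"
  shows "fps2_subst (F ^ k) X Y = fps2_subst F X Y ^ k"
  by (induction k) (simp_all add: fps2_subst_one fps2_subst_mult[OF X0 Y0])

lemma fps2_subst_sum: "finite S \<Longrightarrow> fps2_subst (\<Sum>a\<in>S. f a) X Y = (\<Sum>a\<in>S. fps2_subst (f a) X Y)"
  by (induction S rule: finite_induct) (simp_all add: fps2_subst_add fps2_subst_zero)

lemma fps2_subst_nth_0: "fps2_subst F X Y $ 0 = F$0$0"
  by (simp add: fps2_subst_nth)

lemma fps2_power_nth_eq_0:
  fixes G :: "'a::comm_ring_1 fps fps"
  assumes G0: "G$0$0 = 0"
  shows "i + j < k \<Longrightarrow> (G^k)$i$j = 0"
proof (induction k arbitrary: i j)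
  case 0 thus ?case by simp
next
  case (Suc k)
  have "(G^Suc k)$i$j = (\<Sum>a=0..i. \<Sum>c=0..j. G$a$c * (G^k)$(i-a)$(j-c))"
    by (simp add: fps_mult_nth fps_sum_nth)
  also have "\<dots> = 0"
  proof (intro sum.neutral ballI)
    fix a c assume a: "a \<in> {0..i}" and c: "c \<in> {0..j}"
    show "G$a$c * (G^k)$(i-a)$(j-c) = 0"
    proof (cases "a = 0 \<and> c = 0")
      case True thus ?thesis using G0 by simp
    next
      case False
      hence "(i-a) + (j-c) < k" using Suc.prems a c by auto
      thus ?thesis using Suc.IH by simp
    qed
  qed
  finally show ?case .
qed

text \<open>P(G) for univariate P and G(0,0) = 0: the coefficient of x^i y^j only involves
  G^k for k \<le> i + j.\<close>

definition fps2_compose :: "'a::comm_ring_1 fps \<Rightarrow> 'a fps fps \<Rightarrow> 'a fps fps" where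
  "fps2_compose P G = Abs_fps (\<lambda>i. Abs_fps (\<lambda>j. (\<Sum>k\<le>i+j. fps_const (fps_const (P$k)) * G^k) $i$j))"

lemma fps2_subst_fps2_compose:
  fixes X Y :: "'a::comm_ring_1 fps"
  assumes X0: "X$0 = 0" and Y0: "Y$0 = 0" and G0: "G$0$0 = 0"
  shows "fps2_subst (fps2_compose P G) X Y = fps_compose P (fps2_subst G X Y)"
proof -
  define c where "c k = fps_const (fps_const (P$k))" for k :: nat
  define S where "S N = (\<Sum>k\<le>N. c k * G^k)" for N
  define H where "H = fps2_compose P G"
  have HS: "H$i$j = S N $i$j" if "i + j \<le> N" for i j N
  proof -
    have "S N $i$j = S (i+j) $i$j + (\<Sum>k\<in>{..N} - {..i+j}. c k * G^k)$i$j"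
      unfolding S_def using that by (simp add: sum.subset_diff[of "{..i+j}" "{..N}"] add.commute)
    also have "(\<Sum>k\<in>{..N} - {..i+j}. c k * G^k)$i$j = 0"
      by (simp add: fps_sum_nth c_def fps2_power_nth_eq_0[OF G0])
    finally show ?thesis by (simp add: H_def fps2_compose_def S_def c_def)
  qed
  let ?g = "fps2_subst G X Y"
  have g0: "?g $ 0 = 0" using G0 by (simp add: fps2_subst_nth_0)
  show "fps2_subst (fps2_compose P G) X Y = fps_compose P ?g" unfolding H_def[symmetric]
  proof (rule fps_ext)
    fix n
    have "fps2_subst H X Y $ n = fps2_subst (S (2*n)) X Y $ n"
      unfolding fps2_subst_nth by (intro sum.cong refl) (simp add: HS[of _ _ "2*n"])
    also have "fps2_subst (S (2*n)) X Y = (\<Sum>k\<le>2*n. fps_const (P$k) * ?g^k)"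
      unfolding S_def by (simp add: fps2_subst_sum fps2_subst_mult[OF X0 Y0] fps2_subst_power[OF X0 Y0] c_def fps2_subst_const)
    also have "(\<Sum>k\<le>2*n. fps_const (P$k) * ?g^k) $ n = (\<Sum>k\<le>n. P$k * (?g^k)$n)"
      unfolding fps_sum_nth fps_mult_left_const_nth
      by (rule sum.mono_neutral_right) (auto simp: fps_mult_power_nth_eq_0[OF g0, of n _ 1, simplified])
    also have "\<dots> = fps_compose P ?g $ n" by (simp add: fps_compose_nth atLeast0AtMost)
    finally show "fps2_subst H X Y $ n = fps_compose P ?g $ n" .
  qed
qed

section \<open>The power series part\<close>

lemma sum_fun_apply: "(\<Sum>s\<in>S. f s) x = (\<Sum>s\<in>S. f s x)"
  by (induction S rule: infinite_finite_induct) auto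

lemma power_series_part_iff_subdegree: "y \<in> power_series_part \<longleftrightarrow> (\<forall>b. 0 \<le> fls_subdegree (y b))"
proof
  assume y: "y \<in> power_series_part"
  show "\<forall>b. 0 \<le> fls_subdegree (y b)"
  proof
    fix b
    obtain g where "y b = fps_to_fls g" using y by (auto simp: power_series_part_def)
    thus "0 \<le> fls_subdegree (y b)" by (simp add: fls_subdegree_fls_to_fps_gt0)
  qed
next
  assume h: "\<forall>b. 0 \<le> fls_subdegree (y b)"
  show "y \<in> power_series_part" unfolding power_series_part_def
  proof (intro CollectI allI exI)
    fix b show "y b = fps_to_fls (fls_regpart (y b))" using h by (simp only: fls_regpart_to_fls_trivial)
  qed
qed

lemma power_series_part_iff_nth: "y \<in> power_series_part \<longleftrightarrow> (\<forall>b j. j < 0 \<longrightarrow> y b $$ j = 0)"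
proof
  assume "y \<in> power_series_part"
  hence "0 \<le> fls_subdegree (y b)" for b by (simp add: power_series_part_iff_subdegree)
  thus "\<forall>b j. j < 0 \<longrightarrow> y b $$ j = 0" by (meson fls_eq0_below_subdegree less_le_trans)
next
  assume "\<forall>b j. j < 0 \<longrightarrow> y b $$ j = 0"
  thus "y \<in> power_series_part" unfolding power_series_part_iff_subdegree by (blast intro: fls_subdegree_ge0I)
qed

lemma power_series_part_diff: "y \<in> power_series_part \<Longrightarrow> z \<in> power_series_part \<Longrightarrow> y - z \<in> power_series_part"
  by (simp add: power_series_part_iff_nth)

lemma power_series_part_mult:
  fixes y :: "'b \<Rightarrow> 'a::field fls"
  assumes "y \<in> power_series_part" "z \<in> power_series_part"
  shows "y * z \<in> power_series_part"
  unfolding power_series_part_def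
proof (intro CollectI allI)
  fix b
  obtain g where g: "y b = fps_to_fls g" using assms(1) unfolding power_series_part_def by blast
  obtain h where h: "z b = fps_to_fls h" using assms(2) unfolding power_series_part_def by blast
  have "(y * z) b = fps_to_fls (g * h)" using g h by (simp add: fls_times_fps_to_fls)
  thus "\<exists>g. (y * z) b = fps_to_fls g" by blast
qed

lemma KV_subspace_power_series_part: "KV.subspace (power_series_part :: ('b \<Rightarrow> 'a::field fls) set)"
  by (rule KV.subspaceI) (auto simp: power_series_part_iff_nth kscale_nth)

lemma mult_image_power_series_part_iff:
  fixes w :: "'b \<Rightarrow> 'a::field fls"
  assumes w: "w \<in> power_series_part" and nz: "nonzerodiv w" and y: "y \<in> power_series_part"
  shows "y \<in> (\<lambda>a. w * a) ` power_series_part \<longleftrightarrow> (\<forall>b i. i < fls_subdegree (w b) \<longrightarrow> y b $$ i = 0)"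
proof
  assume "y \<in> (\<lambda>a. w * a) ` power_series_part"
  then obtain a where a: "a \<in> power_series_part" "y = w * a" by auto
  show "\<forall>b i. i < fls_subdegree (w b) \<longrightarrow> y b $$ i = 0"
  proof (intro allI impI)
    fix b i assume i: "i < fls_subdegree (w b)"
    have "0 \<le> fls_subdegree (a b)" using a(1) by (simp add: power_series_part_iff_subdegree)
    hence "i < fls_subdegree (w b) + fls_subdegree (a b)" using i by simp
    thus "y b $$ i = 0" using a(2) by (simp add: fls_times_nth_eq0)
  qed
next
  assume c: "\<forall>b i. i < fls_subdegree (w b) \<longrightarrow> y b $$ i = 0"
  define a where "a = (\<lambda>b. y b / w b)"
  have wb: "w b \<noteq> 0" for b using nz by (simp add: nonzerodiv_def)
  have "a \<in> power_series_part" unfolding power_series_part_iff_subdegree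
  proof
    fix b
    show "0 \<le> fls_subdegree (a b)"
    proof (cases "y b = 0")
      case True thus ?thesis by (simp add: a_def)
    next
      case False
      have "fls_subdegree (w b) \<le> fls_subdegree (y b)"
        using c False by (intro fls_subdegree_geI) auto
      thus ?thesis using False wb by (simp add: a_def divide_inverse)
    qed
  qed
  moreover have "y = w * a" using wb by (auto simp: a_def fun_eq_iff)
  ultimately show "y \<in> (\<lambda>a. w * a) ` power_series_part" by blast
qed

definition total_subdegree :: "('b::finite \<Rightarrow> 'a::zero fls) \<Rightarrow> nat" where
  "total_subdegree w = (\<Sum>b\<in>UNIV. nat (fls_subdegree (w b)))"

definition branch_monomial :: "'b \<Rightarrow> nat \<Rightarrow> 'b \<Rightarrow> 'a::field fls" where
  "branch_monomial b i = (\<lambda>b'. if b' = b then fps_to_fls (fps_X ^ i) else 0)"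

lemma branch_monomial_nth: "branch_monomial b i b' $$ j = (if b' = b \<and> j = int i then 1 else 0)"
  by (auto simp: branch_monomial_def)

lemma sum_kscale_branch_monomial_nth:
  assumes fin: "finite S"
  shows "(\<Sum>s\<in>S. kscale (c s) (branch_monomial (fst s) (snd s))) b' $$ j = (if 0 \<le> j \<and> (b', nat j) \<in> S then c (b', nat j) else 0)"
proof -
  have "(\<Sum>s\<in>S. kscale (c s) (branch_monomial (fst s) (snd s))) b' $$ j = (\<Sum>s\<in>S. if s = (b', nat j) \<and> 0 \<le> j then c s else 0)"
    unfolding sum_fun_apply fls_nth_sum kscale_nth branch_monomial_nth
    by (intro sum.cong refl) auto
  also have "\<dots> = (if 0 \<le> j \<and> (b', nat j) \<in> S then c (b', nat j) else 0)"
    using fin by (cases "0 \<le> j") (simp_all add: sum.delta')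
  finally show ?thesis .
qed

lemma quot_dim_power_series_part_mult:
  fixes w :: "'b::finite \<Rightarrow> 'a::field fls"
  assumes w: "w \<in> power_series_part" and nz: "nonzerodiv w"
  shows "quot_dim power_series_part ((\<lambda>a. w * a) ` power_series_part) (total_subdegree w)"
proof -
  define \<nu> where "\<nu> b = nat (fls_subdegree (w b))" for b
  have \<nu>: "int (\<nu> b) = fls_subdegree (w b)" for b using w by (simp add: \<nu>_def power_series_part_iff_subdegree)
  define S where "S = Sigma UNIV (\<lambda>b. {..<\<nu> b})"
  have fS: "finite S" by (simp add: S_def)
  have cS: "card S = (\<Sum>b\<in>UNIV. \<nu> b)" by (simp add: S_def)
  let ?v = "\<lambda>s. branch_monomial (fst s) (snd s) :: 'b \<Rightarrow> 'a fls"
  let ?Rt = "power_series_part :: ('b \<Rightarrow> 'a fls) set"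
  have vRt: "?v s \<in> ?Rt" for s by (auto simp: power_series_part_iff_nth branch_monomial_nth)
  have sumRt: "(\<Sum>s\<in>S. kscale (c s) (?v s)) \<in> ?Rt" for c
    by (simp add: power_series_part_iff_nth sum_kscale_branch_monomial_nth[OF fS])
  have "quot_basis ?Rt ((\<lambda>a. w * a) ` ?Rt) S ?v" unfolding quot_basis_def
  proof (intro conjI allI impI ballI)
    show "finite S" by fact
  next
    fix s show "?v s \<in> ?Rt" by (rule vRt)
  next
    fix c s assume c: "(\<Sum>s\<in>S. kscale (c s) (?v s)) \<in> (\<lambda>a. w * a) ` ?Rt" and s: "s \<in> S"
    obtain b i where s': "s = (b, i)" by fastforce
    have i: "i < \<nu> b" using s s' by (auto simp: S_def)
    have "(\<Sum>s\<in>S. kscale (c s) (?v s)) b $$ int i = 0"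
      using c mult_image_power_series_part_iff[OF w nz sumRt] i \<nu>[of b] by auto
    thus "c s = 0" using s s' by (simp add: sum_kscale_branch_monomial_nth[OF fS])
  next
    fix y assume y: "y \<in> ?Rt"
    define c where "c s = y (fst s) $$ int (snd s)" for s
    have "y - (\<Sum>s\<in>S. kscale (c s) (?v s)) \<in> (\<lambda>a. w * a) ` ?Rt"
    proof (subst mult_image_power_series_part_iff[OF w nz power_series_part_diff[OF y sumRt]], intro allI impI)
      fix b j assume j: "j < fls_subdegree (w b)"
      show "(y - (\<Sum>s\<in>S. kscale (c s) (?v s))) b $$ j = 0"
      proof (cases "0 \<le> j")
        case True
        hence "(b, nat j) \<in> S" using j \<nu>[of b] by (auto simp: S_def)
        thus ?thesis using True by (simp add: sum_kscale_branch_monomial_nth[OF fS] c_def)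
      next
        case False
        thus ?thesis using y by (simp add: sum_kscale_branch_monomial_nth[OF fS] power_series_part_iff_nth)
      qed
    qed
    thus "\<exists>c. y - (\<Sum>s\<in>S. kscale (c s) (?v s)) \<in> (\<lambda>a. w * a) ` ?Rt" by blast
  qed
  from quot_basis_imp_quot_dim[OF this] show ?thesis using cS by (simp add: \<nu>_def total_subdegree_def)
qed

section \<open>The curve ring\<close>

lemma curve_ring_iff:
  "z \<in> curve_ring X Y \<longleftrightarrow> (\<exists>F. \<forall>b. z b = fps_to_fls (fps2_subst F (X b) (Y b)))"
proof
  assume "z \<in> curve_ring X Y"
  then obtain F where F: "\<forall>b. z b = fps_to_fls (bps_subst F (X b) (Y b))"
    by (auto simp: curve_ring_def)
  have "(\<lambda>i j. Abs_fps (\<lambda>i. Abs_fps (\<lambda>j. F i j)) $ i $ j) = F" by simp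
  thus "\<exists>F. \<forall>b. z b = fps_to_fls (fps2_subst F (X b) (Y b))"
    using F by (metis fps2_subst_def)
next
  assume "\<exists>F. \<forall>b. z b = fps_to_fls (fps2_subst F (X b) (Y b))"
  thus "z \<in> curve_ring X Y" by (auto simp: curve_ring_def fps2_subst_def)
qed

locale param_curve =
  fixes X Y :: "'b \<Rightarrow> 'a::field fps"
  assumes X_nth_0: "X b $ 0 = 0" and Y_nth_0: "Y b $ 0 = 0"
begin

abbreviation "R \<equiv> curve_ring X Y"

lemma R_add: "z \<in> R \<Longrightarrow> w \<in> R \<Longrightarrow> z + w \<in> R"
  unfolding curve_ring_iff
proof (elim exE)
  fix F G
  assume "\<forall>b. z b = fps_to_fls (fps2_subst F (X b) (Y b))" "\<forall>b. w b = fps_to_fls (fps2_subst G (X b) (Y b))"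
  thus "\<exists>H. \<forall>b. (z + w) b = fps_to_fls (fps2_subst H (X b) (Y b))"
    by (intro exI[of _ "F + G"]) (simp add: fps2_subst_add)
qed

lemma R_mult: "z \<in> R \<Longrightarrow> w \<in> R \<Longrightarrow> z * w \<in> R"
  unfolding curve_ring_iff
proof (elim exE)
  fix F G
  assume "\<forall>b. z b = fps_to_fls (fps2_subst F (X b) (Y b))" "\<forall>b. w b = fps_to_fls (fps2_subst G (X b) (Y b))"
  thus "\<exists>H. \<forall>b. (z * w) b = fps_to_fls (fps2_subst H (X b) (Y b))"
    by (intro exI[of _ "F * G"])
      (simp add: fps2_subst_mult[OF X_nth_0 Y_nth_0] fls_times_fps_to_fls)
qed

lemma R_const: "(\<lambda>b. fls_const c) \<in> R"
  unfolding curve_ring_iff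
  by (rule exI[of _ "fps_const (fps_const c)"]) (simp add: fps2_subst_const)

lemma R_one: "1 \<in> R" using R_const[of 1] by (simp add: one_fun_def)

lemma R_zero: "0 \<in> R" using R_const[of 0] by (simp add: zero_fun_def)

lemma KV_subspace_R: "KV.subspace R"
  by (rule KV.subspaceI) (auto simp: R_zero R_add kscale_eq_mult intro: R_mult[OF R_const])

lemma R_sum: "finite S \<Longrightarrow> (\<And>s. s \<in> S \<Longrightarrow> f s \<in> R) \<Longrightarrow> (\<Sum>s\<in>S. f s) \<in> R"
  by (induction S rule: finite_induct) (auto simp: R_zero R_add)

lemma R_prod: "finite S \<Longrightarrow> (\<And>s. s \<in> S \<Longrightarrow> f s \<in> R) \<Longrightarrow> (\<Prod>s\<in>S. f s) \<in> R"
  by (induction S rule: finite_induct) (auto simp: R_one R_mult)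

lemma R_subset_power_series_part: "R \<subseteq> power_series_part"
  by (auto simp: curve_ring_iff power_series_part_def)

lemma R_fps_compose:
  assumes x: "x \<in> R" and x0: "\<forall>b. x b $$ 0 = 0"
  shows "(\<lambda>b. fps_to_fls (fps_compose P (fls_regpart (x b)))) \<in> R"
proof -
  obtain G where G: "\<forall>b. x b = fps_to_fls (fps2_subst G (X b) (Y b))"
    using x by (auto simp: curve_ring_iff)
  have "fps_to_fls (fps2_subst G (X undefined) (Y undefined)) $$ 0 = 0" using x0 G by metis
  hence "G$0$0 = 0" by (simp add: fps2_subst_nth_0)
  hence "\<forall>b. fps_to_fls (fps_compose P (fls_regpart (x b)))
           = fps_to_fls (fps2_subst (fps2_compose P G) (X b) (Y b))"
    using G by (simp add: fps2_subst_fps2_compose[OF X_nth_0 Y_nth_0])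
  thus ?thesis unfolding curve_ring_iff by blast
qed

end

section \<open>The conductor\<close>

lemma fps_X_power_mult_shift:
  fixes g :: "'a::comm_ring_1 fps"
  assumes "\<And>i. i < a \<Longrightarrow> g$i = 0"
  shows "fps_X^a * fps_shift a g = g"
  by (rule fps_ext) (simp add: fps_X_power_mult_nth assms)

lemma eq_upto_fps_compose:
  fixes x :: "'a::comm_ring_1 fps"
  assumes x0: "x$0 = 0"
  shows "eq_upto n (\<Sum>k<Suc n. fps_const (P$k) * x^k) (fps_compose P x)"
  unfolding eq_upto_def
proof (intro allI impI)
  fix m assume m: "m \<le> n"
  have "(\<Sum>k<Suc n. fps_const (P$k) * x^k) $ m = (\<Sum>k<Suc n. P$k * (x^k)$m)"
    by (simp add: fps_sum_nth)
  also have "\<dots> = (\<Sum>k\<in>{0..m}. P$k * (x^k)$m)"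
    by (rule sum.mono_neutral_right)
      (use m in \<open>auto simp: fps_mult_power_nth_eq_0[OF x0, of m _ 1, simplified]\<close>)
  finally show "(\<Sum>k<Suc n. fps_const (P$k) * x^k) $ m = fps_compose P x $ m"
    by (simp add: fps_compose_nth)
qed

lemma fps_divide_off_truncation:
  fixes x f :: "'a::field fps"
  assumes "x \<noteq> 0"
  obtains q where "f = (\<Sum>i<subdegree x. fps_const (f$i) * fps_X^i) + x * q"
proof -
  define a where "a = subdegree x"
  define u where "u = fps_shift a x"
  define t where "t = (\<Sum>i<a. fps_const (f$i) * fps_X^i)"
  have xu: "x = fps_X^a * u"
    unfolding u_def by (rule fps_X_power_mult_shift[symmetric]) (unfold a_def, erule nth_less_subdegree_zero)
  have "u$0 \<noteq> 0" using assms by (simp add: u_def a_def)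
  hence u_inv: "u * inverse u = 1" by (rule inverse_mult_eq_1')
  have "t $ n = (if n < a then f$n else 0)" for n
  proof -
    have "t $ n = (\<Sum>i<a. if n = i then f$i else 0)"
      unfolding t_def fps_sum_nth by (intro sum.cong refl) simp
    thus ?thesis by (simp add: sum.delta)
  qed
  hence "fps_X^a * fps_shift a (f - t) = f - t" by (intro fps_X_power_mult_shift) simp
  moreover have "x * (fps_shift a (f - t) * inverse u) = fps_X^a * fps_shift a (f - t) * (u * inverse u)"
    unfolding xu by (simp only: mult_ac)
  ultimately have "f = t + x * (fps_shift a (f - t) * inverse u)" using u_inv by simp
  thus ?thesis using that unfolding t_def a_def by blast
qed

lemma iterated_division:
  fixes x y :: "'a::comm_ring_1"
  assumes "\<And>f. f = T f + x * Q f"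
  shows "y = (\<Sum>k<K. T ((Q ^^ k) y) * x^k) + x^K * (Q ^^ K) y"
proof (induction K)
  case (Suc K)
  have "x^K * (Q ^^ K) y = x^K * T ((Q ^^ K) y) + x^Suc K * (Q ^^ Suc K) y"
    by (subst assms) (simp add: algebra_simps)
  thus ?case using Suc by (simp add: algebra_simps)
qed simp

lemma fps_expand_over_compose:
  fixes x y :: "'a::field fps"
  assumes x0: "x$0 = 0" and "x \<noteq> 0"
  obtains P where "y = (\<Sum>i<subdegree x. fps_compose (P i) x * fps_X^i)"
proof -
  define a where "a = subdegree x"
  define tr where "tr f = (\<Sum>i<a. fps_const (f$i) * fps_X^i)" for f :: "'a fps"
  have "\<forall>f. \<exists>q. f = tr f + x * q"
    using fps_divide_off_truncation[OF assms(2)] by (metis tr_def a_def)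
  then obtain Q where Q: "\<And>f. f = tr f + x * Q f" by metis
  define r where "r k = (Q ^^ k) y" for k
  define P where "P i = Abs_fps (\<lambda>k. r k $ i)" for i
  have "y = (\<Sum>i<a. fps_compose (P i) x * fps_X^i)"
  proof (rule fps_eq_if_eq_upto)
    fix n
    have expansion: "y = (\<Sum>k<Suc n. tr (r k) * x^k) + x^Suc n * r (Suc n)"
      unfolding r_def by (rule iterated_division[OF Q])
    have "eq_upto n y (\<Sum>k<Suc n. tr (r k) * x^k)"
      unfolding eq_upto_def
    proof (intro allI impI)
      fix m assume "m \<le> n"
      hence "(x^Suc n * r (Suc n)) $ m = 0"
        using fps_mult_power_nth_eq_0[OF x0, of m "Suc n" "r (Suc n)"] by (simp add: mult.commute)
      thus "y $ m = (\<Sum>k<Suc n. tr (r k) * x^k) $ m"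
        by (subst expansion) (simp only: fps_add_nth add_0_right)
    qed
    also have "(\<Sum>k<Suc n. tr (r k) * x^k) = (\<Sum>i<a. (\<Sum>k<Suc n. fps_const (P i $ k) * x^k) * fps_X^i)"
      unfolding tr_def P_def sum_distrib_right
      by (subst sum.swap) (simp add: mult_ac)
    also have "eq_upto n \<dots> (\<Sum>i<a. fps_compose (P i) x * fps_X^i)"
      by (intro eq_upto_sum eq_upto_mult eq_upto_fps_compose[OF x0] eq_upto_refl)
    finally show "eq_upto n y (\<Sum>i<a. fps_compose (P i) x * fps_X^i)" .
  qed
  thus ?thesis using that by (simp add: a_def)
qed

lemma prod_fun_apply: "(\<Prod>s\<in>S. f s) x = (\<Prod>s\<in>S. f s x)"
  by (induction S rule: infinite_finite_induct) auto

lemma fps_to_fls_sum: "fps_to_fls (\<Sum>s\<in>S. f s) = (\<Sum>s\<in>S. fps_to_fls (f s))"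
  by (induction S rule: infinite_finite_induct) auto

locale curve_with_fractions = param_curve X Y for X Y :: "'b::finite \<Rightarrow> 'a::field fps" +
  assumes total_frac: "is_total_ring_of_fractions (curve_ring X Y)"
begin

lemma fraction_exists: "\<exists>r\<in>R. \<exists>s\<in>R. nonzerodiv s \<and> z * s = r"
  using total_frac by (simp add: is_total_ring_of_fractions_def)

lemma exists_nonzerodiv_nth_0_eq_0: "\<exists>x\<in>R. nonzerodiv x \<and> (\<forall>b. x b $$ 0 = 0)"
proof -
  obtain r s where r: "r \<in> R" and s: "s \<in> R" "nonzerodiv s" and e: "(\<lambda>b. fls_X) * s = r"
    using fraction_exists[of "\<lambda>b. fls_X"] by blast
  have "s \<in> power_series_part" using s R_subset_power_series_part by blast
  moreover have rb: "r b = fls_X * s b" for b using e by (auto simp: fun_eq_iff)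
  ultimately have "r b $$ 0 = 0" for b
    unfolding rb fls_X_times_conv_shift(1) by (simp add: power_series_part_iff_nth)
  moreover have "nonzerodiv r" using s(2) by (simp add: nonzerodiv_def rb)
  ultimately show ?thesis using r by blast
qed

lemma power_series_part_R_combination:
  assumes x: "x \<in> R" "nonzerodiv x" "\<forall>b. x b $$ 0 = 0"
    and y: "y \<in> power_series_part"
  obtains Q where "\<And>s. Q s \<in> R"
    and "y = (\<Sum>s\<in>Sigma UNIV (\<lambda>b. {..<subdegree (fls_regpart (x b))}).
               Q s * branch_monomial (fst s) (snd s))"
proof -
  define xr where "xr b = fls_regpart (x b)" for b
  have "x \<in> power_series_part" using x R_subset_power_series_part by blast
  hence xb: "x b = fps_to_fls (xr b)" for b by (simp add: xr_def power_series_part_iff_subdegree)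
  have xr0: "xr b $ 0 = 0" for b using x(3) by (simp add: xr_def)
  have xrnz: "xr b \<noteq> 0" for b using x(2) xb[of b] by (auto simp: nonzerodiv_def)
  have "\<forall>b. \<exists>P. fls_regpart (y b) = (\<Sum>i<subdegree (xr b). fps_compose (P i) (xr b) * fps_X^i)"
    using fps_expand_over_compose[OF xr0 xrnz] by metis
  then obtain PP where PP:
    "\<And>b. fls_regpart (y b) = (\<Sum>i<subdegree (xr b). fps_compose (PP b i) (xr b) * fps_X^i)"
    by metis
  define Q where "Q s = (\<lambda>b'. fps_to_fls (fps_compose (PP (fst s) (snd s)) (xr b')))" for s
  have QR: "Q s \<in> R" for s unfolding Q_def xr_def by (rule R_fps_compose[OF x(1) x(3)])
  have "y b' = (\<Sum>s\<in>Sigma UNIV (\<lambda>b. {..<subdegree (xr b)}). Q s * branch_monomial (fst s) (snd s)) b'"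
    for b'
  proof -
    have "(\<Sum>s\<in>Sigma UNIV (\<lambda>b. {..<subdegree (xr b)}). Q s * branch_monomial (fst s) (snd s)) b'
        = (\<Sum>b\<in>UNIV. \<Sum>i<subdegree (xr b). Q (b,i) b' * branch_monomial b i b')"
      by (simp add: sum_fun_apply sum.Sigma case_prod_unfold)
    also have "\<dots> = (\<Sum>b\<in>UNIV. if b = b' then (\<Sum>i<subdegree (xr b'). Q (b',i) b' * fps_to_fls (fps_X^i)) else 0)"
      by (intro sum.cong refl) (auto simp: branch_monomial_def)
    also have "\<dots> = (\<Sum>i<subdegree (xr b'). Q (b',i) b' * fps_to_fls (fps_X^i))"
      by (simp add: sum.delta')
    also have "\<dots> = fps_to_fls (fls_regpart (y b'))"
      by (simp add: PP[of b'] Q_def fls_times_fps_to_fls fps_to_fls_sum)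
    also have "\<dots> = y b'" using y by (simp add: power_series_part_iff_subdegree)
    finally show ?thesis by simp
  qed
  hence "y = (\<Sum>s\<in>Sigma UNIV (\<lambda>b. {..<subdegree (xr b)}). Q s * branch_monomial (fst s) (snd s))"
    by (rule ext)
  thus ?thesis using that QR unfolding xr_def by blast
qed

lemma conductor_exists: "\<exists>g\<in>R. nonzerodiv g \<and> (\<forall>y\<in>power_series_part. g * y \<in> R)"
proof -
  obtain x where x: "x \<in> R" "nonzerodiv x" "\<forall>b. x b $$ 0 = 0"
    using exists_nonzerodiv_nth_0_eq_0 by blast
  define S where "S = Sigma (UNIV::'b set) (\<lambda>b. {..<subdegree (fls_regpart (x b))})"
  have fS: "finite S" by (simp add: S_def)
  have "\<forall>s. \<exists>r d. r \<in> R \<and> d \<in> R \<and> nonzerodiv d \<and> branch_monomial (fst s) (snd s) * d = r"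
    using fraction_exists by blast
  then obtain num den where rd: "\<And>s. num s \<in> R" "\<And>s. den s \<in> R" "\<And>s. nonzerodiv (den s)"
    "\<And>s. branch_monomial (fst s) (snd s) * den s = num s"
    by metis
  define g where "g = (\<Prod>s\<in>S. den s)"
  have gR: "g \<in> R" unfolding g_def by (rule R_prod[OF fS rd(2)])
  have gnz: "nonzerodiv g"
    using rd(3) fS by (auto simp: nonzerodiv_def g_def prod_fun_apply)
  have "g * y \<in> R" if y: "y \<in> power_series_part" for y
  proof -
    obtain Q where Q: "\<And>s. Q s \<in> R" "y = (\<Sum>s\<in>S. Q s * branch_monomial (fst s) (snd s))"
      using power_series_part_R_combination[OF x y] unfolding S_def by blast
    have "g * y = (\<Sum>s\<in>S. Q s * (branch_monomial (fst s) (snd s) * g))"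
      unfolding Q(2) by (simp add: sum_distrib_left mult_ac)
    also have "\<dots> = (\<Sum>s\<in>S. Q s * (num s * (\<Prod>s'\<in>S - {s}. den s')))"
    proof (intro sum.cong refl)
      fix s assume "s \<in> S"
      hence "g = den s * (\<Prod>s'\<in>S - {s}. den s')" unfolding g_def using fS by (simp add: prod.remove)
      thus "Q s * (branch_monomial (fst s) (snd s) * g) = Q s * (num s * (\<Prod>s'\<in>S - {s}. den s'))"
        using rd(4)[of s] by (simp add: mult.assoc[symmetric])
    qed
    also have "\<dots> \<in> R"
      using fS by (intro R_sum R_mult Q(1) rd(1) R_prod rd(2)) auto
    finally show ?thesis .
  qed
  thus ?thesis using gR gnz by blast
qed

end

section \<open>Minimal embeddings\<close>

definition is_submodule :: "('b \<Rightarrow> 'a::field fls) set \<Rightarrow> ('b \<Rightarrow> 'a fls) set \<Rightarrow> bool" where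
  "is_submodule S A \<longleftrightarrow> KV.subspace A \<and> (\<forall>r\<in>S. \<forall>a\<in>A. r * a \<in> A)"

lemma (in param_curve) fg_submodule_is_submodule:
  assumes "fg_submodule R M"
  shows "is_submodule R M"
proof -
  obtain N and g :: "nat \<Rightarrow> 'b \<Rightarrow> 'a fls" where M: "M = {\<Sum>i<N. r i * g i | r. \<forall>i<N. r i \<in> R}"
    using assms unfolding fg_submodule_def by blast
  have add: "y + y' \<in> M" if y: "y \<in> M" and y': "y' \<in> M" for y y'
  proof -
    obtain r r' where "\<forall>i<N. r i \<in> R" "y = (\<Sum>i<N. r i * g i)" "\<forall>i<N. r' i \<in> R" "y' = (\<Sum>i<N. r' i * g i)"
      using y y' M by auto
    hence "\<exists>r''. y + y' = (\<Sum>i<N. r'' i * g i) \<and> (\<forall>i<N. r'' i \<in> R)"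
      by (intro exI[of _ "\<lambda>i. r i + r' i"]) (simp add: sum.distrib distrib_right R_add)
    thus ?thesis unfolding M by blast
  qed
  have mult: "z * y \<in> M" if z: "z \<in> R" and y: "y \<in> M" for z y
  proof -
    obtain r where "\<forall>i<N. r i \<in> R" "y = (\<Sum>i<N. r i * g i)" using y M by auto
    hence "\<exists>r'. z * y = (\<Sum>i<N. r' i * g i) \<and> (\<forall>i<N. r' i \<in> R)"
      using z by (intro exI[of _ "\<lambda>i. z * r i"]) (simp add: sum_distrib_left mult.assoc R_mult)
    thus ?thesis unfolding M by blast
  qed
  have "\<exists>r. (0::'b \<Rightarrow> 'a fls) = (\<Sum>i<N. r i * g i) \<and> (\<forall>i<N. r i \<in> R)"
    by (intro exI[of _ "\<lambda>i. 0"]) (simp add: R_zero)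
  hence "0 \<in> M" unfolding M by blast
  with add mult show ?thesis
    unfolding is_submodule_def by (auto intro!: KV.subspaceI simp: kscale_eq_mult R_const)
qed

lemma is_submodule_colon:
  assumes "is_submodule S M"
  shows "is_submodule S {z. z * m \<in> M}"
  using assms unfolding is_submodule_def
  by (auto intro!: KV.subspaceI simp: KV.subspace_0 KV.subspace_add KV.subspace_scale
      distrib_right kscale_mult_left[symmetric] mult.assoc)

lemma colon_mult:
  assumes u: "nonzerodiv u"
  shows "{z. z * (u * m) \<in> M} = (\<lambda>a. inverse_fun u * a) ` {z. z * m \<in> M}"
proof (intro set_eqI iffI)
  fix z assume "z \<in> {z. z * (u * m) \<in> M}"
  hence "z * u \<in> {z. z * m \<in> M}" by (simp add: mult.assoc)
  moreover have "inverse_fun u * (z * u) = (inverse_fun u * u) * z" by (simp only: mult_ac)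
  hence "z = inverse_fun u * (z * u)" by (simp add: inverse_fun_mult'[OF u])
  ultimately show "z \<in> (\<lambda>a. inverse_fun u * a) ` {z. z * m \<in> M}" by blast
next
  fix z assume "z \<in> (\<lambda>a. inverse_fun u * a) ` {z. z * m \<in> M}"
  then obtain a where a: "a * m \<in> M" "z = inverse_fun u * a" by auto
  have "inverse_fun u * a * (u * m) = (inverse_fun u * u) * (a * m)" by (simp only: mult_ac)
  thus "z \<in> {z. z * (u * m) \<in> M}" using a by (simp add: inverse_fun_mult'[OF u])
qed

lemma quot_dim_cyclic_iff:
  assumes m: "nonzerodiv m"
  shows "quot_dim M (cyclic S m) n \<longleftrightarrow> quot_dim {z. z * m \<in> M} S n"
proof -
  have colon: "{z. z * m \<in> M} = (\<lambda>a. inverse_fun m * a) ` M"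
    using colon_mult[OF m, of 1 M] by simp
  have cyclic: "cyclic S m = (\<lambda>a. m * a) ` S"
    by (auto simp: cyclic_def mult.commute)
  have "M = (\<lambda>a. m * a) ` {z. z * m \<in> M}"
    unfolding colon by (simp add: image_mult_cancel inverse_fun_mult[OF m])
  thus ?thesis
    using quot_dim_mult_image[OF m, of "{z. z * m \<in> M}" S n]
      quot_dim_mult_image[OF nonzerodiv_inverse_fun[OF m], of M "(\<lambda>a. m * a) ` S" n]
    unfolding colon cyclic image_mult_cancel[OF inverse_fun_mult'[OF m]] by auto
qed

text \<open>The parameter c only has to avoid 0 and the finitely many values that cancel the
  constant term of 1 + c z on a branch where z has no pole.\<close>

lemma exists_one_plus_kscale_pole:
  fixes z :: "'b::finite \<Rightarrow> 'a::field fls"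
  assumes inf: "infinite (UNIV :: 'a set)" and b': "fls_subdegree (z b') < 0"
  obtains c where "nonzerodiv (1 + kscale c z)" and "\<forall>b. fls_subdegree ((1 + kscale c z) b) \<le> 0"
    and "fls_subdegree ((1 + kscale c z) b') < 0"
proof -
  define bad where "bad = insert 0 (range (\<lambda>b. - inverse (z b $$ 0)))"
  have "finite bad" by (simp add: bad_def)
  then obtain c where c: "c \<notin> bad" using ex_new_if_finite[OF inf] by blast
  have c0: "c \<noteq> 0" using c by (simp add: bad_def)
  let ?u = "1 + kscale c z"
  have u_nth: "?u b $$ j = (if j = 0 then 1 else 0) + c * z b $$ j" for b j
    by (simp add: kscale_nth)
  have pole: "?u b \<noteq> 0 \<and> fls_subdegree (?u b) < 0" if "fls_subdegree (z b) < 0" for b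
  proof -
    have "z b \<noteq> 0" using that by auto
    hence nz: "?u b $$ fls_subdegree (z b) \<noteq> 0" using that u_nth c0 by simp
    hence "?u b \<noteq> 0" by (metis fls_zero_nth)
    moreover have "fls_subdegree (?u b) \<le> fls_subdegree (z b)" using nz by (rule fls_subdegree_leI)
    ultimately show ?thesis using that by simp
  qed
  have no_pole: "?u b \<noteq> 0 \<and> fls_subdegree (?u b) \<le> 0" if "\<not> fls_subdegree (z b) < 0" for b
  proof -
    have "1 + c * z b $$ 0 \<noteq> 0"
    proof
      assume h: "1 + c * z b $$ 0 = 0"
      hence "z b $$ 0 \<noteq> 0" by auto
      with h have "c = - inverse (z b $$ 0)" by (simp add: field_simps add_eq_0_iff)
      thus False using c by (simp add: bad_def)
    qed
    hence nz: "?u b $$ 0 \<noteq> 0" using u_nth[of b 0] by simp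
    hence "?u b \<noteq> 0" by (metis fls_zero_nth)
    moreover have "fls_subdegree (?u b) \<le> 0" using nz by (rule fls_subdegree_leI)
    ultimately show ?thesis by simp
  qed
  have "nonzerodiv ?u" "\<forall>b. fls_subdegree (?u b) \<le> 0"
    using pole no_pole by (force simp: nonzerodiv_def)+
  moreover have "fls_subdegree (?u b') < 0" using pole[OF b'] by simp
  ultimately show ?thesis using that by blast
qed

context curve_with_fractions
begin

lemma quot_dim_R_mult_image:
  assumes A: "is_submodule R A" and RA: "R \<subseteq> A" and qA: "quot_dim A R \<delta>"
    and w: "w \<in> power_series_part" "nonzerodiv w" and w_inv: "inverse_fun w \<in> A"
  obtains n where "quot_dim ((\<lambda>a. w * a) ` A) R n" and "n + total_subdegree w = \<delta>"
proof -
  let ?Rt = "power_series_part :: ('b \<Rightarrow> 'a fls) set"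
  obtain g where g: "g \<in> R" "nonzerodiv g" "\<forall>y\<in>?Rt. g * y \<in> R"
    using conductor_exists by blast
  txt \<open>dim wA/wgR~ = dim A/gR~ = \<delta> + dim R/gR~ is computed again along
    wgR~ \<subseteq> gR~ \<subseteq> R \<subseteq> wA, where dim gR~/wgR~ = total_subdegree w.\<close>
  define B where "B = (\<lambda>a. w * a) ` A"
  define D where "D = (\<lambda>a. g * a) ` ?Rt"
  define D' where "D' = (\<lambda>a. w * a) ` D"
  have sA: "KV.subspace A" using A by (simp add: is_submodule_def)
  have sB: "KV.subspace B" unfolding B_def by (rule KV_subspace_mult_image[OF sA])
  have sD: "KV.subspace D" unfolding D_def by (rule KV_subspace_mult_image[OF KV_subspace_power_series_part])
  have sD': "KV.subspace D'" unfolding D'_def by (rule KV_subspace_mult_image[OF sD])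
  have DR: "D \<subseteq> R" unfolding D_def using g(3) by blast
  have RB: "R \<subseteq> B"
  proof
    fix r assume "r \<in> R"
    hence "r * inverse_fun w \<in> A" using A w_inv by (simp add: is_submodule_def mult.commute)
    moreover have "r = w * (r * inverse_fun w)" using inverse_fun_mult[OF w(2)] by (simp add: mult_ac)
    ultimately show "r \<in> B" unfolding B_def by blast
  qed
  have D'_eq: "D' = (\<lambda>a. g * a) ` ((\<lambda>a. w * a) ` ?Rt)"
    unfolding D'_def D_def image_mult_mult by (simp add: mult.commute)
  hence D'D: "D' \<subseteq> D" unfolding D_def using w(1) power_series_part_mult by blast
  have "g \<in> ?Rt" using g(1) R_subset_power_series_part by blast
  hence "quot_dim ?Rt D (total_subdegree g)"
    unfolding D_def using g(2) by (rule quot_dim_power_series_part_mult)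
  then obtain e where qRD: "quot_dim R D e"
    using quot_dim_split[OF KV_subspace_power_series_part KV_subspace_R sD DR R_subset_power_series_part]
    by blast
  have "quot_dim A D (\<delta> + e)" by (rule quot_dim_add[OF KV_subspace_R sD DR RA qA qRD])
  hence qBD': "quot_dim B D' (\<delta> + e)" unfolding B_def D'_def by (rule quot_dim_mult_image[OF w(2)])
  have qDD': "quot_dim D D' (total_subdegree w)" unfolding D'_eq D_def
    by (rule quot_dim_mult_image[OF g(2) quot_dim_power_series_part_mult[OF w]])
  obtain q k where qBD: "quot_dim B D q" and "quot_dim D D' k" and "q + k = \<delta> + e"
    using quot_dim_split[OF sB sD sD' D'D _ qBD'] DR RB by blast
  moreover obtain n e' where "quot_dim B R n" "quot_dim R D e'" "n + e' = q"
    using quot_dim_split[OF sB KV_subspace_R sD DR RB qBD] by blast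
  ultimately show ?thesis
    using that quot_dim_unique[OF sD' qDD'] quot_dim_unique[OF sD qRD] unfolding B_def by force
qed

lemma pole_shortens_embedding:
  assumes inf: "infinite (UNIV :: 'a set)"
    and A: "is_submodule R A" and RA: "R \<subseteq> A" and qA: "quot_dim A R \<delta>"
    and z: "z \<in> A" "z \<notin> power_series_part"
  obtains u n where "u \<in> A" and "nonzerodiv u" and "n < \<delta>"
    and "quot_dim ((\<lambda>a. inverse_fun u * a) ` A) R n"
proof -
  obtain b0 where b0: "fls_subdegree (z b0) < 0"
    using z(2) by (auto simp: power_series_part_iff_subdegree not_le)
  obtain c where u: "nonzerodiv (1 + kscale c z)" "\<forall>b. fls_subdegree ((1 + kscale c z) b) \<le> 0"
    "fls_subdegree ((1 + kscale c z) b0) < 0"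
    using exists_one_plus_kscale_pole[where z = z and b' = b0, OF inf b0] by blast
  define u where "u = 1 + kscale c z"
  have sA: "KV.subspace A" using A by (simp add: is_submodule_def)
  have "u \<in> A"
    unfolding u_def using R_one RA z(1) KV.subspace_add[OF sA] KV.subspace_scale[OF sA] by blast
  define w where "w = inverse_fun u"
  have subdeg: "fls_subdegree (w b) = - fls_subdegree (u b)" for b
    by (simp add: w_def inverse_fun_def)
  have w: "w \<in> power_series_part" "nonzerodiv w"
    using u subdeg by (simp_all add: power_series_part_iff_subdegree u_def w_def nonzerodiv_inverse_fun)
  have "inverse_fun w = u" by (simp add: w_def inverse_fun_def)
  have "0 < nat (fls_subdegree (w b0))" using u(3) subdeg[of b0] by (simp add: u_def)
  also have "\<dots> \<le> total_subdegree w" unfolding total_subdegree_def by (rule member_le_sum) auto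
  finally obtain n where "quot_dim ((\<lambda>a. w * a) ` A) R n" and "n < \<delta>"
    using quot_dim_R_mult_image[OF A RA qA w] \<open>inverse_fun w = u\<close> \<open>u \<in> A\<close> by (metis less_add_same_cancel1)
  thus ?thesis using that \<open>u \<in> A\<close> u(1) by (simp add: u_def w_def)
qed

end

theorem mainTheorem17:
  fixes X Y :: "'b::finite \<Rightarrow> 'a::{alg_closed_field, field_char_0} fps"
    and M :: "('b \<Rightarrow> 'a fls) set"
    and m :: "'b \<Rightarrow> 'a fls"
    and \<delta> :: nat
  assumes param: "\<forall>b. X b $ 0 = 0 \<and> Y b $ 0 = 0"
    and total_frac: "is_total_ring_of_fractions (curve_ring X Y)"
    and normalization: "integral_closure (curve_ring X Y) = power_series_part"
    and M_fg: "fg_submodule (curve_ring X Y) M"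
    and M_rank_one: "\<exists>u\<in>M. nonzerodiv u"
    and m_in: "m \<in> M" and m_inj: "nonzerodiv m"
    and m_dim: "quot_dim M (cyclic (curve_ring X Y) m) \<delta>"
    and \<delta>_min: "\<forall>m'\<in>M. nonzerodiv m' \<longrightarrow>
                  (\<forall>n. quot_dim M (cyclic (curve_ring X Y) m') n \<longrightarrow> \<delta> \<le> n)"
  shows "curve_ring X Y \<subseteq> {z. z * m \<in> M} \<and> {z. z * m \<in> M} \<subseteq> power_series_part"
proof -
  interpret curve_with_fractions X Y
    using param total_frac by unfold_locales auto
  define A where "A = {z. z * m \<in> M}"
  have M_mod: "is_submodule R M" using M_fg by (rule fg_submodule_is_submodule)
  have A_mod: "is_submodule R A" unfolding A_def using M_mod by (rule is_submodule_colon)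
  have RA: "R \<subseteq> A" using M_mod m_in by (auto simp: A_def is_submodule_def)
  have qA: "quot_dim A R \<delta>" using m_dim quot_dim_cyclic_iff[OF m_inj] by (simp add: A_def)
  have "A \<subseteq> power_series_part"
  proof (rule subsetI, rule ccontr)
    fix z assume "z \<in> A" "z \<notin> power_series_part"
    then obtain u n where u: "u \<in> A" "nonzerodiv u" and "n < \<delta>"
      and "quot_dim ((\<lambda>a. inverse_fun u * a) ` A) R n"
      using pole_shortens_embedding[OF infinite_UNIV_char_0 A_mod RA qA] by metis
    hence "quot_dim M (cyclic R (u * m)) n"
      using quot_dim_cyclic_iff[OF nonzerodiv_mult[OF u(2) m_inj]] colon_mult[OF u(2)]
      by (simp add: A_def)
    moreover have "u * m \<in> M" "nonzerodiv (u * m)"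
      using u m_inj by (simp_all add: A_def nonzerodiv_mult)
    ultimately show False using \<delta>_min \<open>n < \<delta>\<close> by force
  qed
  thus ?thesis using RA by (simp add: A_def)
qed

end
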